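(* Suppose $\nu:\mathcal{P}\to\mathcal{H}$ is pathwise differentiable at $P_0$, $\beta_n\in\ell^2\cap[0,1]^{\mathbb{N}}$ for each $n$, and both $\mathcal{R}_n^{j,\beta_n}$ and $\mathcal{D}_n^{j,\beta_n}$ are $O_p(\|\beta_n\|_{\ell^2}/n^{1/2})$ for $j\in\{1,2\}$. Then $$\bar{\nu}_n^{\beta_n}-\nu(P_0)=\frac12\sum_{j=1}^2\mathcal{B}_n^{j,\beta_n}+P_n\phi_0^{\beta_n}+O_p(\|\beta_n\|_{\ell^2}/n^{1/2}).$$ Moreover, if $\mathcal{B}_n^{j,\beta_n}=O_p(\|\beta_n\|_{\ell^2}/n^{1/2})$ for $j\in\{1,2\}$, then $\bar{\nu}_n^{\beta_n}-\nu(P_0)=O_p(\|\beta_n\|_{\ell^2}/n^{1/2})$.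
   Context: Let $(\mathcal{Z},\mathbf{B})$ be a Polish space, $\mathcal{P}$ a model of distributions dominated by a $\sigma$-finite measure $\lambda$, $\mathcal{H}$ a real separable Hilbert space with orthonormal basis $(h_k)_{k\ge1}$ (padded with zeros if finite-dimensional). $\nu$ is pathwise differentiable at $P$ if there is a continuous linear $\dot{\nu}_P$ from the tangent space $\dot{\mathcal{P}}_P$ (closed linear span in $L^2(P)$ of scores $s$ of submodels $\{P_\epsilon\}\subset\mathcal{P}$ with $\|p_\epsilon^{1/2}-p^{1/2}-\epsilon sp^{1/2}/2\|_{L^2(\lambda)}=o(\epsilon)$) to $\mathcal{H}$ with $\|\nu(P_\epsilon)-\nu(P)-\epsilon\dot{\nu}_P(s)\|_{\mathcal{H}}=o(\epsilon)$ along every such submodel; $\dot{\nu}_P^*:\mathcal{H}\to\dot{\mathcal{P}}_P$ is its adjoint (efficient influence operator). For $\beta\in\ell^2\cap[0,1]^{\mathbb{N}}$ and $P$ at which $\nu$ is pathwise differentiable, the $\beta$-regularized EIF is $\phi_P^\beta(z)=\sum_k\beta_k\dot{\nu}_P^*(h_k)(z)h_k\in L^2(P;\mathcal{H})$. $Qf=\int f\,dQ$ (Bochner integral for $\mathcal{H}$-valued $f$). Cross-fitting: $P_0\in\mathcal{P}$, $n$ even, $Z_1,\dots,Z_n$ iid $P_0$ with empirical distribution $P_n$; $\widehat{P}_n^1\in\mathcal{P}$ estimates $P_0$ from $Z_1,\dots,Z_{n/2}$ and $P_n^1$ is the empirical distribution of $Z_{n/2+1},\dots,Z_n$; $\widehat{P}_n^2$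 uses $Z_{n/2+1},\dots,Z_n$ and $P_n^2$ is the empirical distribution of $Z_1,\dots,Z_{n/2}$; $\nu$ is assumed pathwise differentiable at each $\widehat{P}_n^j$, and $\phi_n^{j,\beta}=\phi^\beta_{\widehat{P}_n^j}$, $\phi_0^\beta=\phi^\beta_{P_0}$. Regularized one-step estimator: $\bar{\nu}_n^\beta=\frac12\sum_j[\nu(\widehat{P}_n^j)+P_n^j\phi_n^{j,\beta}]$. For $P\in\mathcal{P}$: $\mathcal{B}_P^\beta=\sum_k(1-\beta_k)\langle\nu(P)-\nu(P_0),h_k\rangle_{\mathcal{H}}h_k$ and $\mathcal{R}_P^\beta=\nu(P)-\nu(P_0)+P_0\phi_P^\beta-\mathcal{B}_P^\beta$; $\mathcal{B}_n^{j,\beta}=\mathcal{B}^\beta_{\widehat{P}_n^j}$, $\mathcal{R}_n^{j,\beta}=\mathcal{R}^\beta_{\widehat{P}_n^j}$, $\mathcal{D}_n^{j,\beta}=(P_n^j-P_0)(\phi_n^{j,\beta}-\phi_0^\beta)$. $O_p$ of $\mathcal{H}$-valued terms refers to their norms. *)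

theory Defs
  imports "HOL-Probability.Probability"
begin

definition dens :: "'z measure \<Rightarrow> 'z measure \<Rightarrow> 'z \<Rightarrow> real" where
  "dens lam P z = enn2real (RN_deriv lam P z)"

definition qmd_path ::
  "'z measure \<Rightarrow> 'z measure set \<Rightarrow> 'z measure \<Rightarrow> (real \<Rightarrow> 'z measure) \<Rightarrow> ('z \<Rightarrow> real) \<Rightarrow> bool" where
  "qmd_path lam Pm P Pe s \<longleftrightarrow>
     Pe 0 = P \<and> (\<forall>\<^sub>F e in nhds 0. Pe e \<in> Pm) \<and>
     s \<in> borel_measurable P \<and> integrable P (\<lambda>z. (s z)\<^sup>2) \<and>
     ((\<lambda>e. (\<integral>\<^sup>+ z. ennreal ((sqrt (dens lam (Pe e) z) - sqrt (dens lam P z)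
               - e * s z * sqrt (dens lam P z) / 2)\<^sup>2) \<partial>lam) / ennreal (e\<^sup>2))
        \<longlongrightarrow> 0) (at 0)"

definition scores :: "'z measure \<Rightarrow> 'z measure set \<Rightarrow> 'z measure \<Rightarrow> ('z \<Rightarrow> real) set" where
  "scores lam Pm P = {s. \<exists>Pe. qmd_path lam Pm P Pe s}"

definition lin_span_fun :: "('z \<Rightarrow> real) set \<Rightarrow> ('z \<Rightarrow> real) set" where
  "lin_span_fun S = {f. \<exists>(k::nat) c g. (\<forall>i<k. g i \<in> S) \<and> f = (\<lambda>z. \<Sum>i<k. c i * g i z)}"

definition tangent_space :: "'z measure \<Rightarrow> 'z measure set \<Rightarrow> 'z measure \<Rightarrow> ('z \<Rightarrow> real) set" where
  "tangent_space lam Pm P = {g. g \<in> borel_measurable P \<and> integrable P (\<lambda>z. (g z)\<^sup>2) \<and>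
     (\<forall>e>0. \<exists>f\<in>lin_span_fun (scores lam Pm P). (\<integral>z. (g z - f z)\<^sup>2 \<partial>P) < e)}"

definition pd_deriv ::
  "'z measure \<Rightarrow> 'z measure set \<Rightarrow> ('z measure \<Rightarrow> 'h::real_normed_vector) \<Rightarrow> 'z measure
   \<Rightarrow> (('z \<Rightarrow> real) \<Rightarrow> 'h) \<Rightarrow> bool" where
  "pd_deriv lam Pm nu P D \<longleftrightarrow>
     (\<forall>f\<in>tangent_space lam Pm P. \<forall>g\<in>tangent_space lam Pm P. \<forall>a b.
        D (\<lambda>z. a * f z + b * g z) = a *\<^sub>R D f + b *\<^sub>R D g) \<and>
     (\<exists>C. \<forall>f\<in>tangent_space lam Pm P. norm (D f) \<le> C * sqrt (\<integral>z. (f z)\<^sup>2 \<partial>P)) \<and>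
     (\<forall>Pe s. qmd_path lam Pm P Pe s \<longrightarrow>
        ((\<lambda>e. norm (nu (Pe e) - nu P - e *\<^sub>R D s) / e) \<longlongrightarrow> 0) (at 0))"

definition pathwise_differentiable ::
  "'z measure \<Rightarrow> 'z measure set \<Rightarrow> ('z measure \<Rightarrow> 'h::real_normed_vector) \<Rightarrow> 'z measure \<Rightarrow> bool" where
  "pathwise_differentiable lam Pm nu P \<longleftrightarrow> (\<exists>D. pd_deriv lam Pm nu P D)"

definition pd_op ::
  "'z measure \<Rightarrow> 'z measure set \<Rightarrow> ('z measure \<Rightarrow> 'h::real_normed_vector) \<Rightarrow> 'z measure
   \<Rightarrow> ('z \<Rightarrow> real) \<Rightarrow> 'h" where
  "pd_op lam Pm nu P = (SOME D. pd_deriv lam Pm nu P D)"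

text \<open>Efficient influence operator (adjoint of the pathwise derivative), a representative.\<close>
definition eio ::
  "'z measure \<Rightarrow> 'z measure set \<Rightarrow> ('z measure \<Rightarrow> 'h::real_inner) \<Rightarrow> 'z measure \<Rightarrow> 'h \<Rightarrow> 'z \<Rightarrow> real" where
  "eio lam Pm nu P h = (SOME g. g \<in> tangent_space lam Pm P \<and>
     (\<forall>s\<in>tangent_space lam Pm P. inner (pd_op lam Pm nu P s) h = (\<integral>z. s z * g z \<partial>P)))"

text \<open>beta-regularized EIF: sum over k of beta_k (eio h_k)(z) h_k (pointwise series; 0 where it diverges).\<close>
definition reg_eif ::
  "'z measure \<Rightarrow> 'z measure set \<Rightarrow> ('z measure \<Rightarrow> 'h::{real_inner,banach}) \<Rightarrow> (nat \<Rightarrow> 'h)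
   \<Rightarrow> 'z measure \<Rightarrow> (nat \<Rightarrow> real) \<Rightarrow> 'z \<Rightarrow> 'h" where
  "reg_eif lam Pm nu hb P beta z =
     (if summable (\<lambda>k. (beta k * eio lam Pm nu P (hb k) z) *\<^sub>R hb k)
      then (\<Sum>k. (beta k * eio lam Pm nu P (hb k) z) *\<^sub>R hb k) else 0)"

definition reg_bias ::
  "('z measure \<Rightarrow> 'h::{real_inner,banach}) \<Rightarrow> 'z measure \<Rightarrow> (nat \<Rightarrow> 'h) \<Rightarrow> (nat \<Rightarrow> real) \<Rightarrow> 'z measure \<Rightarrow> 'h" where
  "reg_bias nu P0 hb beta P = (\<Sum>k. ((1 - beta k) * inner (nu P - nu P0) (hb k)) *\<^sub>R hb k)"

definition reg_rem ::
  "'z measure \<Rightarrow> 'z measure set \<Rightarrow> ('z measure \<Rightarrow> 'h::{real_inner,banach,second_countable_topology})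
   \<Rightarrow> (nat \<Rightarrow> 'h) \<Rightarrow> 'z measure \<Rightarrow> (nat \<Rightarrow> real) \<Rightarrow> 'z measure \<Rightarrow> 'h" where
  "reg_rem lam Pm nu hb P0 beta P =
     nu P - nu P0 + (\<integral>z. reg_eif lam Pm nu hb P beta z \<partial>P0) - reg_bias nu P0 hb beta P"

definition emp_mean :: "'z list \<Rightarrow> ('z \<Rightarrow> 'h::real_vector) \<Rightarrow> 'h" where
  "emp_mean xs f = (1 / real (length xs)) *\<^sub>R sum_list (map f xs)"

definition ell2_norm :: "(nat \<Rightarrow> real) \<Rightarrow> real" where
  "ell2_norm beta = sqrt (\<Sum>k. (beta k)\<^sup>2)"

definition evens :: "nat filter" where
  "evens = inf sequentially (principal {n. even n})"

definition Op :: "nat filter \<Rightarrow> 'a measure \<Rightarrow> (nat \<Rightarrow> 'a \<Rightarrow> 'h::real_normed_vector) \<Rightarrow> (nat \<Rightarrow> real) \<Rightarrow> bool" where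
  "Op F M X r \<longleftrightarrow> (\<forall>e>0. \<exists>K. \<forall>\<^sub>F n in F. \<exists>A\<in>sets M. measure M A \<ge> 1 - e \<and>
       (\<forall>\<omega>\<in>A. norm (X n \<omega>) \<le> K * r n))"

definition first_half :: "(nat \<Rightarrow> 'a \<Rightarrow> 'z) \<Rightarrow> nat \<Rightarrow> 'a \<Rightarrow> 'z list" where
  "first_half Z n \<omega> = map (\<lambda>i. Z i \<omega>) [0..<n div 2]"

definition second_half :: "(nat \<Rightarrow> 'a \<Rightarrow> 'z) \<Rightarrow> nat \<Rightarrow> 'a \<Rightarrow> 'z list" where
  "second_half Z n \<omega> = map (\<lambda>i. Z i \<omega>) [n div 2..<n]"

text \<open>Regularized one-step estimator: P1, P2 are the two fold estimates, xs1, xs2 the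
  samples on which the corresponding correction is averaged.\<close>
definition one_step ::
  "'z measure \<Rightarrow> 'z measure set \<Rightarrow> ('z measure \<Rightarrow> 'h::{real_inner,banach}) \<Rightarrow> (nat \<Rightarrow> 'h)
   \<Rightarrow> (nat \<Rightarrow> real) \<Rightarrow> 'z measure \<Rightarrow> 'z list \<Rightarrow> 'z measure \<Rightarrow> 'z list \<Rightarrow> 'h" where
  "one_step lam Pm nu hb beta P1 xs1 P2 xs2 = (1/2) *\<^sub>R
     ((nu P1 + emp_mean xs1 (reg_eif lam Pm nu hb P1 beta))
    + (nu P2 + emp_mean xs2 (reg_eif lam Pm nu hb P2 beta)))"

definition emp_term ::
  "'z measure \<Rightarrow> 'z measure set \<Rightarrow> ('z measure \<Rightarrow> 'h::{real_inner,banach,second_countable_topology})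
   \<Rightarrow> (nat \<Rightarrow> 'h) \<Rightarrow> 'z measure \<Rightarrow> (nat \<Rightarrow> real) \<Rightarrow> 'z measure \<Rightarrow> 'z list \<Rightarrow> 'h" where
  "emp_term lam Pm nu hb P0 beta P xs =
     emp_mean xs (\<lambda>z. reg_eif lam Pm nu hb P beta z - reg_eif lam Pm nu hb P0 beta z)
   - (\<integral>z. reg_eif lam Pm nu hb P beta z - reg_eif lam Pm nu hb P0 beta z \<partial>P0)"

end

theory Submission
  imports Defs
begin

text \<open>Subtracting \<open>\<nu>(P\<^sub>0)\<close> from each fold of the one-step estimator and inserting the definitions
  of the remainder and of the empirical process term gives, exactly,
  \<open>R\<^sup>j + B\<^sup>j + D\<^sup>j + P\<^sub>n\<^sup>j \<phi>\<^sub>0 - P\<^sub>0 \<phi>\<^sub>0\<close>; since the folds have equal size, the two empirical means of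
  \<open>\<phi>\<^sub>0\<close> average to \<open>P\<^sub>n \<phi>\<^sub>0\<close>. The first claim therefore reduces to \<open>P\<^sub>0 \<phi>\<^sub>0 = 0\<close>: the
  components \<open>\<nu>\<^sup>*(h\<^sub>k)\<close> of \<open>\<phi>\<^sub>0\<close> lie in the tangent space, which consists of mean-zero
  functions because scores of quadratic-mean differentiable submodels have mean zero.
  For the second claim one also needs \<open>P\<^sub>n \<phi>\<^sub>0 = O\<^sub>p(\<parallel>\<beta>\<parallel>/\<surd>n)\<close>: by Bessel's inequality and the
  boundedness of the efficient influence operator, \<open>E \<parallel>P\<^sub>n \<phi>\<^sub>0\<parallel>\<^sup>2 \<le> C\<^sup>2 \<parallel>\<beta>\<parallel>\<^sup>2 / n\<close>, and
  Chebyshev's inequality concludes. The efficient influence operator itself is a Riesz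
  representer in \<open>L\<^sup>2(P\<^sub>0)\<close>, obtained by minimising \<open>\<parallel>g\<parallel>\<^sup>2 - 2 L g\<close> over the tangent space.\<close>

lemma integrable_mult_if_square_integrable:
  fixes f g :: "'a \<Rightarrow> real"
  assumes [measurable]: "f \<in> borel_measurable M" "g \<in> borel_measurable M"
    and "integrable M (\<lambda>z. (f z)\<^sup>2)" "integrable M (\<lambda>z. (g z)\<^sup>2)"
  shows "integrable M (\<lambda>z. f z * g z)"
proof (rule Bochner_Integration.integrable_bound)
  show "integrable M (\<lambda>z. (f z)\<^sup>2 + (g z)\<^sup>2)" using assms by auto
  show "AE z in M. norm (f z * g z) \<le> norm ((f z)\<^sup>2 + (g z)\<^sup>2)"
  proof (intro AE_I2)
    fix z
    have "\<bar>f z * g z\<bar> \<le> 2 * \<bar>f z\<bar> * \<bar>g z\<bar>" by (simp add: abs_mult)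
    also have "\<dots> \<le> (f z)\<^sup>2 + (g z)\<^sup>2" using sum_squares_bound[of "\<bar>f z\<bar>" "\<bar>g z\<bar>"] by simp
    finally show "norm (f z * g z) \<le> norm ((f z)\<^sup>2 + (g z)\<^sup>2)" by simp
  qed
qed measurable

lemma square_lincomb_expand:
  fixes x y a b :: real
  shows "(a * x + b * y)\<^sup>2 = a\<^sup>2 * x\<^sup>2 + (2 * a * b) * (x * y) + b\<^sup>2 * y\<^sup>2"
  by (simp add: power2_eq_square algebra_simps)

lemma square_integrable_lincomb:
  fixes f g :: "'a \<Rightarrow> real"
  assumes [measurable]: "f \<in> borel_measurable M" "g \<in> borel_measurable M"
    and "integrable M (\<lambda>z. (f z)\<^sup>2)" "integrable M (\<lambda>z. (g z)\<^sup>2)"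
  shows "integrable M (\<lambda>z. (a * f z + b * g z)\<^sup>2)"
  unfolding square_lincomb_expand
  using assms integrable_mult_if_square_integrable[OF assms] by auto

lemma integral_square_lincomb:
  fixes f g :: "'a \<Rightarrow> real"
  assumes [measurable]: "f \<in> borel_measurable M" "g \<in> borel_measurable M"
    and "integrable M (\<lambda>z. (f z)\<^sup>2)" "integrable M (\<lambda>z. (g z)\<^sup>2)"
  shows "(\<integral>z. (a * f z + b * g z)\<^sup>2 \<partial>M) =
     a\<^sup>2 * (\<integral>z. (f z)\<^sup>2 \<partial>M) + 2 * a * b * (\<integral>z. f z * g z \<partial>M) + b\<^sup>2 * (\<integral>z. (g z)\<^sup>2 \<partial>M)"
  unfolding square_lincomb_expand
  using assms integrable_mult_if_square_integrable[OF assms] by auto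

lemma square_integrable_diff:
  fixes f g :: "'a \<Rightarrow> real"
  assumes "f \<in> borel_measurable M" "g \<in> borel_measurable M"
    and "integrable M (\<lambda>z. (f z)\<^sup>2)" "integrable M (\<lambda>z. (g z)\<^sup>2)"
  shows "integrable M (\<lambda>z. (f z - g z)\<^sup>2)"
  using square_integrable_lincomb[OF assms, of 1 "-1"] by simp

lemma integral_square_lincomb_le:
  fixes f g :: "'a \<Rightarrow> real"
  assumes "f \<in> borel_measurable M" "g \<in> borel_measurable M"
    and sf: "integrable M (\<lambda>z. (f z)\<^sup>2)" and sg: "integrable M (\<lambda>z. (g z)\<^sup>2)"
  shows "(\<integral>z. (a * f z + b * g z)\<^sup>2 \<partial>M) \<le> 2 * a\<^sup>2 * (\<integral>z. (f z)\<^sup>2 \<partial>M) + 2 * b\<^sup>2 * (\<integral>z. (g z)\<^sup>2 \<partial>M)"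
proof -
  have "(\<integral>z. (a * f z + b * g z)\<^sup>2 \<partial>M) \<le> (\<integral>z. 2 * a\<^sup>2 * (f z)\<^sup>2 + 2 * b\<^sup>2 * (g z)\<^sup>2 \<partial>M)"
  proof (rule integral_mono)
    show "integrable M (\<lambda>z. (a * f z + b * g z)\<^sup>2)" by (rule square_integrable_lincomb[OF assms])
    show "integrable M (\<lambda>z. 2 * a\<^sup>2 * (f z)\<^sup>2 + 2 * b\<^sup>2 * (g z)\<^sup>2)" using sf sg by simp
    fix z
    have "0 \<le> (a * f z - b * g z)\<^sup>2" by simp
    then show "(a * f z + b * g z)\<^sup>2 \<le> 2 * a\<^sup>2 * (f z)\<^sup>2 + 2 * b\<^sup>2 * (g z)\<^sup>2"
      by (simp add: power2_eq_square algebra_simps)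
  qed
  also have "\<dots> = 2 * a\<^sup>2 * (\<integral>z. (f z)\<^sup>2 \<partial>M) + 2 * b\<^sup>2 * (\<integral>z. (g z)\<^sup>2 \<partial>M)"
    using sf sg by simp
  finally show ?thesis .
qed

lemma sq_le_mult_if_quadratic_nonneg:
  fixes A B C :: real
  assumes nonneg: "\<And>t. 0 \<le> A - 2 * t * B + t\<^sup>2 * C" and "C \<ge> 0"
  shows "B\<^sup>2 \<le> A * C"
proof (cases "C = 0")
  case True
  have "B = 0"
  proof (rule ccontr)
    assume "B \<noteq> 0"
    have "0 \<le> A - 2 * ((A + 1) / (2 * B)) * B" using nonneg[of "(A + 1) / (2 * B)"] True by simp
    also have "\<dots> = -1" using \<open>B \<noteq> 0\<close> by (simp add: field_simps)
    finally show False by simp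
  qed
  then show ?thesis using nonneg[of 0] True by simp
next
  case False
  then have C: "C > 0" using \<open>C \<ge> 0\<close> by simp
  have "0 \<le> A - 2 * (B / C) * B + (B / C)\<^sup>2 * C" by (rule nonneg)
  also have "\<dots> = (A * C - B\<^sup>2) / C" using C by (simp add: field_simps power2_eq_square)
  finally show ?thesis using C by (simp add: zero_le_divide_iff)
qed

lemma abs_integral_mult_le:
  fixes f g :: "'a \<Rightarrow> real"
  assumes "f \<in> borel_measurable M" "g \<in> borel_measurable M"
    and "integrable M (\<lambda>z. (f z)\<^sup>2)" "integrable M (\<lambda>z. (g z)\<^sup>2)"
  shows "\<bar>\<integral>z. f z * g z \<partial>M\<bar> \<le> sqrt (\<integral>z. (f z)\<^sup>2 \<partial>M) * sqrt (\<integral>z. (g z)\<^sup>2 \<partial>M)"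
proof -
  have "(\<integral>z. f z * g z \<partial>M)\<^sup>2 \<le> (\<integral>z. (f z)\<^sup>2 \<partial>M) * (\<integral>z. (g z)\<^sup>2 \<partial>M)"
  proof (rule sq_le_mult_if_quadratic_nonneg)
    fix t
    have "0 \<le> (\<integral>z. (1 * f z + (- t) * g z)\<^sup>2 \<partial>M)" by simp
    then show "0 \<le> (\<integral>z. (f z)\<^sup>2 \<partial>M) - 2 * t * (\<integral>z. f z * g z \<partial>M) + t\<^sup>2 * (\<integral>z. (g z)\<^sup>2 \<partial>M)"
      unfolding integral_square_lincomb[OF assms] by simp
  qed simp
  then show ?thesis by (metis real_sqrt_abs real_sqrt_le_mono real_sqrt_mult)
qed

lemma nn_integral_le_imp_integrable:
  fixes f :: "'a \<Rightarrow> real"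
  assumes [measurable]: "f \<in> borel_measurable M" and nonneg: "\<And>x. 0 \<le> f x"
    and le: "(\<integral>\<^sup>+x. ennreal (f x) \<partial>M) \<le> ennreal c" and "0 \<le> c"
  shows "integrable M f \<and> (\<integral>x. f x \<partial>M) \<le> c"
proof -
  have int: "integrable M f"
    by (rule integrableI_nonneg) (use nonneg le in \<open>auto simp: top.not_eq_extremum le_less_trans\<close>)
  have "ennreal (\<integral>x. f x \<partial>M) \<le> ennreal c"
    using nn_integral_eq_integral[OF int] nonneg le by simp
  then show ?thesis using int \<open>0 \<le> c\<close> by simp
qed

section \<open>Completeness of \<open>L\<^sup>2\<close>\<close>

lemma convergent_if_increments_eventually_le_geometric:
  fixes x :: "nat \<Rightarrow> real"
  assumes "eventually (\<lambda>k. \<bar>x (Suc k) - x k\<bar> \<le> (1/2)^k) sequentially"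
  shows "convergent x"
proof -
  have "summable (\<lambda>k. x (Suc k) - x k)"
    by (rule summable_comparison_test_ev) (use assms in auto)
  then have "(\<lambda>m. \<Sum>k<m. x (Suc k) - x k) \<longlonglongrightarrow> (\<Sum>k. x (Suc k) - x k)"
    by (rule summable_LIMSEQ)
  then have "(\<lambda>m. (x m - x 0) + x 0) \<longlonglongrightarrow> (\<Sum>k. x (Suc k) - x k) + x 0"
    unfolding sum_lessThan_telescope by (intro tendsto_add) auto
  then show ?thesis by (auto simp: convergent_def)
qed

text \<open>Markov's inequality bounds the probability of \<open>\<bar>u\<^sub>k\<^sub>+\<^sub>1 - u\<^sub>k\<bar> \<ge> 2\<^sup>-\<^sup>k\<close> by \<open>2\<^sup>-\<^sup>k\<close>;
  Borel--Cantelli then makes the increments eventually geometric almost surely.\<close>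

lemma AE_convergent_if_fast_L2_Cauchy:
  fixes u :: "nat \<Rightarrow> 'a \<Rightarrow> real"
  assumes "prob_space M"
    and [measurable]: "\<And>k. u k \<in> borel_measurable M"
    and sq: "\<And>k. integrable M (\<lambda>z. (u (Suc k) z - u k z)\<^sup>2)"
    and fast: "\<And>k. (\<integral>z. (u (Suc k) z - u k z)\<^sup>2 \<partial>M) \<le> (1/8)^k"
  shows "AE z in M. convergent (\<lambda>k. u k z)"
proof -
  interpret prob_space M by fact
  define A where "A k = {z\<in>space M. (1/4::real)^k \<le> (u (Suc k) z - u k z)\<^sup>2}" for k
  have [measurable]: "A k \<in> sets M" for k unfolding A_def by measurable
  have mA: "measure M (A k) \<le> (1/2)^k" for k
  proof -
    have "measure M (A k) \<le> (\<integral>z. (u (Suc k) z - u k z)\<^sup>2 \<partial>M) / (1/4)^k"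
      unfolding A_def by (rule integral_Markov_inequality_measure[OF sq, where A="space M"]) auto
    also have "\<dots> \<le> (1/8)^k / (1/4)^k" by (intro divide_right_mono fast) auto
    also have "\<dots> = (1/2)^k" by (simp add: power_divide field_simps flip: power_mult_distrib)
    finally show ?thesis .
  qed
  have "summable (\<lambda>k. measure M (A k))"
    by (rule summable_comparison_test[where g="\<lambda>k. (1/2::real)^k"]) (use mA in auto)
  then have "AE z in M. eventually (\<lambda>k. z \<in> space M - A k) sequentially"
    by (intro borel_cantelli_AE1) (auto simp: emeasure_eq_measure)
  then show ?thesis
  proof eventually_elim
    case (elim z)
    have "eventually (\<lambda>k. \<bar>u (Suc k) z - u k z\<bar> \<le> (1/2)^k) sequentially"
      using elim
    proof eventually_elim
      case (elim k)
      then have "(u (Suc k) z - u k z)\<^sup>2 < (1/4)^k" unfolding A_def by auto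
      also have "(1/4::real)^k = ((1/2)^k)\<^sup>2"
        by (simp add: power_divide power2_eq_square flip: power_mult_distrib)
      finally have "\<bar>u (Suc k) z - u k z\<bar> \<le> \<bar>(1/2::real)^k\<bar>"
        unfolding abs_le_square_iff by simp
      then show ?case by simp
    qed
    then show ?case by (rule convergent_if_increments_eventually_le_geometric)
  qed
qed

lemma integral_square_diff_le_if_AE_tendsto:
  fixes u :: "nat \<Rightarrow> 'a \<Rightarrow> real"
  assumes [measurable]: "f \<in> borel_measurable M" "g \<in> borel_measurable M" "\<And>m. u m \<in> borel_measurable M"
    and lim: "AE z in M. (\<lambda>m. u m z) \<longlonglongrightarrow> f z"
    and sq: "\<And>m. integrable M (\<lambda>z. (u m z - g z)\<^sup>2)"
    and bound: "\<forall>\<^sub>F m in sequentially. (\<integral>z. (u m z - g z)\<^sup>2 \<partial>M) \<le> c" and "0 \<le> c"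
  shows "integrable M (\<lambda>z. (f z - g z)\<^sup>2) \<and> (\<integral>z. (f z - g z)\<^sup>2 \<partial>M) \<le> c"
proof (rule nn_integral_le_imp_integrable)
  have "(\<integral>\<^sup>+z. ennreal ((f z - g z)\<^sup>2) \<partial>M) = (\<integral>\<^sup>+z. liminf (\<lambda>m. ennreal ((u m z - g z)\<^sup>2)) \<partial>M)"
  proof (rule nn_integral_cong_AE)
    show "AE z in M. ennreal ((f z - g z)\<^sup>2) = liminf (\<lambda>m. ennreal ((u m z - g z)\<^sup>2))"
      using lim
    proof eventually_elim
      case (elim z)
      have "(\<lambda>m. ennreal ((u m z - g z)\<^sup>2)) \<longlonglongrightarrow> ennreal ((f z - g z)\<^sup>2)"
        by (intro tendsto_ennrealI tendsto_intros elim)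
      then show ?case by (intro lim_imp_Liminf[symmetric]) auto
    qed
  qed
  also have "\<dots> \<le> liminf (\<lambda>m. \<integral>\<^sup>+z. ennreal ((u m z - g z)\<^sup>2) \<partial>M)"
    by (rule nn_integral_liminf) measurable
  also have "\<dots> \<le> ennreal c"
  proof (rule Liminf_le)
    show "\<forall>\<^sub>F m in sequentially. (\<integral>\<^sup>+z. ennreal ((u m z - g z)\<^sup>2) \<partial>M) \<le> ennreal c"
      using bound by eventually_elim (simp add: nn_integral_eq_integral[OF sq] ennreal_leI)
  qed simp
  finally show "(\<integral>\<^sup>+z. ennreal ((f z - g z)\<^sup>2) \<partial>M) \<le> ennreal c" .
qed (use \<open>0 \<le> c\<close> in auto)

lemma L2_limit_if_fast_Cauchy:
  fixes u :: "nat \<Rightarrow> 'a \<Rightarrow> real"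
  assumes P: "prob_space M"
    and meas[measurable]: "\<And>n. u n \<in> borel_measurable M"
    and sq: "\<And>n. integrable M (\<lambda>z. (u n z)\<^sup>2)"
    and cauchy: "\<And>n m. n \<le> m \<Longrightarrow> (\<integral>z. (u m z - u n z)\<^sup>2 \<partial>M) \<le> (1/8)^n"
  shows "\<exists>f. f \<in> borel_measurable M \<and> integrable M (\<lambda>z. (f z)\<^sup>2) \<and>
    (\<forall>n. integrable M (\<lambda>z. (f z - u n z)\<^sup>2) \<and> (\<integral>z. (f z - u n z)\<^sup>2 \<partial>M) \<le> (1/8)^n)"
proof -
  have sq_diff: "integrable M (\<lambda>z. (u m z - u n z)\<^sup>2)" for m n
    by (rule square_integrable_diff[OF meas meas sq sq])
  define f where "f z = lim (\<lambda>k. u k z)" for z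
  have f_meas[measurable]: "f \<in> borel_measurable M" unfolding f_def by measurable
  have "AE z in M. convergent (\<lambda>k. u k z)"
    by (rule AE_convergent_if_fast_L2_Cauchy[OF P meas sq_diff cauchy]) simp
  then have lim: "AE z in M. (\<lambda>k. u k z) \<longlonglongrightarrow> f z"
    by eventually_elim (simp add: f_def convergent_LIMSEQ_iff)
  have bound: "integrable M (\<lambda>z. (f z - u n z)\<^sup>2) \<and> (\<integral>z. (f z - u n z)\<^sup>2 \<partial>M) \<le> (1/8)^n" for n
    using cauchy by (intro integral_square_diff_le_if_AE_tendsto[OF f_meas meas meas lim sq_diff])
      (auto simp: eventually_sequentially)
  have "integrable M (\<lambda>z. (1 * (f z - u 0 z) + 1 * u 0 z)\<^sup>2)"
    by (rule square_integrable_lincomb) (use bound sq in auto)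
  then have "integrable M (\<lambda>z. (f z)\<^sup>2)" by simp
  then show ?thesis using f_meas bound by blast
qed

section \<open>Riesz representation on a closed subspace of \<open>L\<^sup>2\<close>\<close>

lemma tendsto_integral_mult_if_L2_tendsto:
  fixes f s :: "'a \<Rightarrow> real"
  assumes [measurable]: "f \<in> borel_measurable M" "s \<in> borel_measurable M" "\<And>n. u n \<in> borel_measurable M"
    and sf: "integrable M (\<lambda>z. (f z)\<^sup>2)" and ss: "integrable M (\<lambda>z. (s z)\<^sup>2)"
    and su: "\<And>n. integrable M (\<lambda>z. (u n z)\<^sup>2)"
    and lim: "(\<lambda>n. \<integral>z. (u n z - f z)\<^sup>2 \<partial>M) \<longlonglongrightarrow> 0"
  shows "(\<lambda>n. \<integral>z. u n z * s z \<partial>M) \<longlonglongrightarrow> (\<integral>z. f z * s z \<partial>M)"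
proof -
  have diff: "(\<integral>z. u n z * s z \<partial>M) - (\<integral>z. f z * s z \<partial>M) = (\<integral>z. (u n z - f z) * s z \<partial>M)" for n
    by (simp add: left_diff_distrib Bochner_Integration.integral_diff
        integrable_mult_if_square_integrable sf ss su)
  have "(\<lambda>n. (\<integral>z. u n z * s z \<partial>M) - (\<integral>z. f z * s z \<partial>M)) \<longlonglongrightarrow> 0"
  proof (rule Lim_null_comparison[OF always_eventually])
    show "\<forall>n. norm ((\<integral>z. u n z * s z \<partial>M) - (\<integral>z. f z * s z \<partial>M))
        \<le> sqrt (\<integral>z. (u n z - f z)\<^sup>2 \<partial>M) * sqrt (\<integral>z. (s z)\<^sup>2 \<partial>M)"
      unfolding diff by (auto intro!: abs_integral_mult_le square_integrable_diff sf ss su)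
    have "(\<lambda>n. sqrt (\<integral>z. (u n z - f z)\<^sup>2 \<partial>M) * sqrt (\<integral>z. (s z)\<^sup>2 \<partial>M)) \<longlonglongrightarrow> sqrt 0 * sqrt (\<integral>z. (s z)\<^sup>2 \<partial>M)"
      by (intro tendsto_intros lim)
    then show "(\<lambda>n. sqrt (\<integral>z. (u n z - f z)\<^sup>2 \<partial>M) * sqrt (\<integral>z. (s z)\<^sup>2 \<partial>M)) \<longlonglongrightarrow> 0"
      by simp
  qed
  then show ?thesis by (simp add: LIM_zero_iff)
qed

locale L2_subspace_functional =
  fixes M :: "'a measure" and T :: "('a \<Rightarrow> real) set"
    and L :: "('a \<Rightarrow> real) \<Rightarrow> real" and C :: real
  assumes prob: "prob_space M"
    and mem_L2: "\<And>g. g \<in> T \<Longrightarrow> g \<in> borel_measurable M \<and> integrable M (\<lambda>z. (g z)\<^sup>2)"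
    and zero_mem: "(\<lambda>z. 0) \<in> T"
    and lincomb_mem: "\<And>f g a b. f \<in> T \<Longrightarrow> g \<in> T \<Longrightarrow> (\<lambda>z. a * f z + b * g z) \<in> T"
    and closed: "\<And>g. g \<in> borel_measurable M \<Longrightarrow> integrable M (\<lambda>z. (g z)\<^sup>2) \<Longrightarrow>
       (\<forall>e>0. \<exists>f\<in>T. (\<integral>z. (g z - f z)\<^sup>2 \<partial>M) < e) \<Longrightarrow> g \<in> T"
    and linear: "\<And>f g a b. f \<in> T \<Longrightarrow> g \<in> T \<Longrightarrow> L (\<lambda>z. a * f z + b * g z) = a * L f + b * L g"
    and bounded: "\<And>f. f \<in> T \<Longrightarrow> \<bar>L f\<bar> \<le> C * sqrt (\<integral>z. (f z)\<^sup>2 \<partial>M)"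
begin

text \<open>The representer is the minimiser of \<open>energy\<close> over \<open>T\<close>.\<close>

definition energy :: "('a \<Rightarrow> real) \<Rightarrow> real" where
  "energy g = (\<integral>z. (g z)\<^sup>2 \<partial>M) - 2 * L g"

lemma energy_lower_bound:
  assumes "g \<in> T"
  shows "- C\<^sup>2 \<le> energy g"
proof -
  define x where "x = sqrt (\<integral>z. (g z)\<^sup>2 \<partial>M)"
  have "L g \<le> C * x" using bounded[OF assms] unfolding x_def by simp
  then have "x\<^sup>2 - 2 * (C * x) \<le> energy g" unfolding energy_def x_def by simp
  moreover have "- C\<^sup>2 \<le> x\<^sup>2 - 2 * (C * x)"
    using zero_le_power2[of "x - C"] by (simp add: power2_eq_square algebra_simps)
  ultimately show ?thesis by simp
qed

lemma energy_parallelogram: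
  assumes "f \<in> T" "g \<in> T"
  shows "(\<integral>z. (f z - g z)\<^sup>2 \<partial>M) = 2 * (energy f + energy g - 2 * energy (\<lambda>z. (1/2) * f z + (1/2) * g z))"
proof -
  have [measurable]: "f \<in> borel_measurable M" "g \<in> borel_measurable M"
    and "integrable M (\<lambda>z. (f z)\<^sup>2)" "integrable M (\<lambda>z. (g z)\<^sup>2)"
    using mem_L2 assms by auto
  note expand = integral_square_lincomb[OF this]
  have "(\<integral>z. (f z - g z)\<^sup>2 \<partial>M) = (\<integral>z. (1 * f z + (-1) * g z)\<^sup>2 \<partial>M)" by simp
  then show ?thesis
    unfolding energy_def linear[OF assms] expand by (simp add: power2_eq_square algebra_simps)
qed

lemma energy_minimizing_sequence:
  "\<exists>u. (\<forall>n. u n \<in> T) \<and> (\<forall>n. \<forall>g\<in>T. energy (u n) \<le> energy g + (1/8)^n / 4) \<and>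
    (\<forall>n m. n \<le> m \<longrightarrow> (\<integral>z. (u m z - u n z)\<^sup>2 \<partial>M) \<le> (1/8)^n)"
proof -
  define m0 where "m0 = Inf (energy ` T)"
  define \<epsilon> where "\<epsilon> n = (1/8::real)^n / 4" for n
  have bdd: "bdd_below (energy ` T)"
    using energy_lower_bound by (auto intro!: bdd_belowI[where m="- C\<^sup>2"])
  have m0_le: "m0 \<le> energy g" if "g \<in> T" for g
    unfolding m0_def using bdd that by (auto intro!: cInf_lower)
  have "\<exists>g\<in>T. energy g < m0 + \<epsilon> n" for n
  proof -
    have "Inf (energy ` T) < m0 + \<epsilon> n" unfolding m0_def \<epsilon>_def by simp
    moreover have "energy ` T \<noteq> {}" using zero_mem by blast
    ultimately show ?thesis using cInf_lessD[of "energy ` T"] by auto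
  qed
  then obtain u where uT: "\<And>n. u n \<in> T" and u: "\<And>n. energy (u n) < m0 + \<epsilon> n" by metis
  have "(\<integral>z. (u m z - u n z)\<^sup>2 \<partial>M) \<le> (1/8)^n" if "n \<le> m" for n m
  proof -
    have "\<epsilon> m \<le> \<epsilon> n" unfolding \<epsilon>_def using that by (simp add: power_decreasing divide_right_mono)
    have "(\<integral>z. (u m z - u n z)\<^sup>2 \<partial>M) = 2 * (energy (u m) + energy (u n) - 2 * energy (\<lambda>z. (1/2) * u m z + (1/2) * u n z))"
      by (rule energy_parallelogram[OF uT uT])
    also have "\<dots> \<le> 2 * ((m0 + \<epsilon> m) + (m0 + \<epsilon> n) - 2 * m0)"
      using u[of m] u[of n] m0_le[OF lincomb_mem[OF uT[of m] uT[of n], of "1/2" "1/2"]] by simp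
    also have "\<dots> \<le> 4 * \<epsilon> n" using \<open>\<epsilon> m \<le> \<epsilon> n\<close> by simp
    finally show ?thesis unfolding \<epsilon>_def by simp
  qed
  moreover have "\<forall>g\<in>T. energy (u n) \<le> energy g + (1/8)^n / 4" for n
    using u[of n] m0_le unfolding \<epsilon>_def by force
  ultimately show ?thesis using uT by blast
qed

text \<open>First-order condition: \<open>energy (u\<^sub>n + t s) \<ge> energy u\<^sub>n - \<epsilon>\<^sub>n\<close> for all \<open>t\<close>, and in the limit
  this quadratic inequality in \<open>t\<close> forces the linear coefficient \<open>\<integral> s f - L s\<close> to vanish.\<close>

lemma representer_if_L2_limit_of_minimizing:
  assumes uT: "\<And>n. u n \<in> T"
    and near_min: "\<And>n. \<forall>g\<in>T. energy (u n) \<le> energy g + \<epsilon> n" and \<epsilon>: "\<epsilon> \<longlonglongrightarrow> 0"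
    and [measurable]: "f \<in> borel_measurable M" and sf: "integrable M (\<lambda>z. (f z)\<^sup>2)"
    and lim: "(\<lambda>n. \<integral>z. (u n z - f z)\<^sup>2 \<partial>M) \<longlonglongrightarrow> 0"
    and sT: "s \<in> T"
  shows "L s = (\<integral>z. s z * f z \<partial>M)"
proof -
  have s_meas[measurable]: "s \<in> borel_measurable M" and u_meas[measurable]: "\<And>n. u n \<in> borel_measurable M"
    and ss: "integrable M (\<lambda>z. (s z)\<^sup>2)" and su: "\<And>n. integrable M (\<lambda>z. (u n z)\<^sup>2)"
    using mem_L2 sT uT by auto
  define S2 where "S2 = (\<integral>z. (s z)\<^sup>2 \<partial>M)"
  define c where "c = (\<integral>z. f z * s z \<partial>M) - L s"
  have quadratic: "0 \<le> 2 * t * c + t\<^sup>2 * S2" for t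
  proof -
    define a where "a n = 2 * t * ((\<integral>z. u n z * s z \<partial>M) - L s) + t\<^sup>2 * S2" for n
    have "- \<epsilon> n \<le> a n" for n
    proof -
      have "energy (u n) \<le> energy (\<lambda>z. 1 * u n z + t * s z) + \<epsilon> n"
        using near_min[of n] lincomb_mem[OF uT[of n] sT, of 1 t] by blast
      also have "energy (\<lambda>z. 1 * u n z + t * s z) = energy (u n) + a n"
        unfolding a_def energy_def linear[OF uT sT] integral_square_lincomb[OF u_meas s_meas su ss] S2_def
        by (simp add: algebra_simps)
      finally show ?thesis by simp
    qed
    moreover have "a \<longlonglongrightarrow> 2 * t * c + t\<^sup>2 * S2"
      unfolding a_def c_def
      by (intro tendsto_intros tendsto_integral_mult_if_L2_tendsto[OF _ s_meas u_meas sf ss su lim]) simp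
    moreover have "(\<lambda>n. - \<epsilon> n) \<longlonglongrightarrow> 0" using tendsto_minus[OF \<epsilon>] by simp
    ultimately show ?thesis using LIMSEQ_le[of "\<lambda>n. - \<epsilon> n" 0 a] by blast
  qed
  have "(- c)\<^sup>2 \<le> 0 * S2"
  proof (rule sq_le_mult_if_quadratic_nonneg)
    show "0 \<le> 0 - 2 * t * (- c) + t\<^sup>2 * S2" for t using quadratic[of t] by simp
    show "0 \<le> S2" unfolding S2_def by simp
  qed
  then show ?thesis by (simp add: c_def mult.commute)
qed

theorem riesz_representation:
  "\<exists>g\<in>T. \<forall>s\<in>T. L s = (\<integral>z. s z * g z \<partial>M)"
proof -
  obtain u where uT: "\<And>n. u n \<in> T" and near_min: "\<And>n. \<forall>g\<in>T. energy (u n) \<le> energy g + (1/8)^n / 4"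
    and cauchy: "\<And>n m. n \<le> m \<Longrightarrow> (\<integral>z. (u m z - u n z)\<^sup>2 \<partial>M) \<le> (1/8)^n"
    using energy_minimizing_sequence by blast
  have "\<And>n. u n \<in> borel_measurable M" "\<And>n. integrable M (\<lambda>z. (u n z)\<^sup>2)" using mem_L2 uT by auto
  then obtain f where f_meas: "f \<in> borel_measurable M" and sf: "integrable M (\<lambda>z. (f z)\<^sup>2)"
    and fu: "\<And>n. integrable M (\<lambda>z. (f z - u n z)\<^sup>2)" "\<And>n. (\<integral>z. (f z - u n z)\<^sup>2 \<partial>M) \<le> (1/8)^n"
    using L2_limit_if_fast_Cauchy[OF prob _ _ cauchy] by blast
  have lim: "(\<lambda>n. \<integral>z. (u n z - f z)\<^sup>2 \<partial>M) \<longlonglongrightarrow> 0"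
    by (rule Lim_null_comparison[OF always_eventually, where g="\<lambda>n. (1/8)^n"])
      (use fu in \<open>auto simp: power2_commute intro!: LIMSEQ_power_zero\<close>)
  have "f \<in> T"
  proof (rule closed[OF f_meas sf], intro allI impI)
    fix e :: real assume "e > 0"
    then obtain n where "(1/8::real)^n < e" using real_arch_pow_inv[of e "1/8"] by auto
    then show "\<exists>g\<in>T. (\<integral>z. (f z - g z)\<^sup>2 \<partial>M) < e" using fu(2)[of n] uT[of n] by force
  qed
  moreover have "(\<lambda>n. (1/8::real)^n / 4) \<longlonglongrightarrow> 0"
    by (intro tendsto_divide_zero LIMSEQ_power_zero) auto
  ultimately show ?thesis
    using representer_if_L2_limit_of_minimizing[OF uT near_min _ f_meas sf lim] by blast
qed

end

section \<open>Scores have mean zero\<close>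

lemma dens_properties:
  fixes lam Q :: "'z::topological_space measure"
  assumes lam: "sigma_finite_measure lam" "sets lam = sets borel"
    and Q: "prob_space Q" "sets Q = sets borel" "absolutely_continuous lam Q"
  shows "dens lam Q \<in> borel_measurable lam" "\<And>z. 0 \<le> dens lam Q z"
    "density lam (\<lambda>z. ennreal (dens lam Q z)) = Q"
    "integrable lam (dens lam Q)" "(\<integral>z. dens lam Q z \<partial>lam) = 1"
proof -
  interpret sigma_finite_measure lam by (rule lam(1))
  interpret Q: prob_space Q by (rule Q(1))
  have sets_eq: "sets Q = sets lam" using lam Q by simp
  show meas: "dens lam Q \<in> borel_measurable lam" unfolding dens_def by measurable
  show nonneg: "\<And>z. 0 \<le> dens lam Q z" unfolding dens_def by simp
  have "AE x in lam. RN_deriv lam Q x \<noteq> \<infinity>"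
    by (rule RN_deriv_finite[OF _ Q(3) sets_eq]) (use Q(1) prob_space_imp_sigma_finite in auto)
  then have "density lam (\<lambda>z. ennreal (dens lam Q z)) = density lam (RN_deriv lam Q)"
    by (intro density_cong) (auto simp: dens_def less_top intro!: ennreal_enn2real)
  also have "\<dots> = Q" by (rule density_RN_deriv[OF Q(3) sets_eq])
  finally show dens: "density lam (\<lambda>z. ennreal (dens lam Q z)) = Q" .
  have "integrable (density lam (\<lambda>z. ennreal (dens lam Q z))) (\<lambda>z. 1::real)" using dens by simp
  then show "integrable lam (dens lam Q)"
    by (subst (asm) integrable_density) (use meas nonneg in auto)
  have "(\<integral>z. 1 \<partial>(density lam (\<lambda>z. ennreal (dens lam Q z)))) = (1::real)"
    using dens by (simp add: Q.prob_space)
  then show "(\<integral>z. dens lam Q z \<partial>lam) = 1"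
    by (subst (asm) integral_density) (use meas nonneg in auto)
qed

text \<open>Write \<open>\<surd>q = \<surd>p + e a + r\<close>. Integrating \<open>q - p = 2 e a \<surd>p + 2 r \<surd>p + (e a + r)\<^sup>2\<close> and using
  \<open>\<integral>q = \<integral>p = 1\<close> gives \<open>e \<bar>2 \<integral> a \<surd>p\<bar> \<le> 2 \<parallel>r\<parallel> + \<parallel>e a + r\<parallel>\<^sup>2\<close>, which is \<open>O(\<delta> e)\<close> when \<open>\<parallel>r\<parallel> \<le> \<delta> e\<close>.\<close>

lemma abs_integral_mult_sqrt_density_le:
  fixes p q a :: "'a \<Rightarrow> real"
  assumes [measurable]: "p \<in> borel_measurable lam" "q \<in> borel_measurable lam" "a \<in> borel_measurable lam"
    and p: "\<And>z. 0 \<le> p z" "integrable lam p" "(\<integral>z. p z \<partial>lam) = 1"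
    and q: "\<And>z. 0 \<le> q z" "integrable lam q" "(\<integral>z. q z \<partial>lam) = 1"
    and sa: "integrable lam (\<lambda>z. (a z)\<^sup>2)"
    and sr: "integrable lam (\<lambda>z. (sqrt (q z) - sqrt (p z) - e * a z)\<^sup>2)"
    and small: "(\<integral>z. (sqrt (q z) - sqrt (p z) - e * a z)\<^sup>2 \<partial>lam) \<le> (\<delta> * e)\<^sup>2"
    and e: "0 < e" "e \<le> \<delta>" "\<delta> \<le> 1"
  shows "\<bar>2 * (\<integral>z. a z * sqrt (p z) \<partial>lam)\<bar> \<le> \<delta> * (4 + 2 * (\<integral>z. (a z)\<^sup>2 \<partial>lam))"
proof -
  define r where "r z = sqrt (q z) - sqrt (p z) - e * a z" for z
  define A where "A = (\<integral>z. (a z)\<^sup>2 \<partial>lam)"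
  define Rr where "Rr = (\<integral>z. (r z)\<^sup>2 \<partial>lam)"
  have [measurable]: "r \<in> borel_measurable lam" unfolding r_def by measurable
  have sr': "integrable lam (\<lambda>z. (r z)\<^sup>2)" using sr unfolding r_def .
  have sp: "integrable lam (\<lambda>z. (sqrt (p z))\<^sup>2)" using p by simp
  have "sqrt Rr \<le> sqrt ((\<delta> * e)\<^sup>2)" using small unfolding Rr_def r_def by (rule real_sqrt_le_mono)
  then have sqrt_Rr: "sqrt Rr \<le> \<delta> * e" using e by simp
  have split: "q z - p z = 2 * (e * (a z * sqrt (p z))) + 2 * (r z * sqrt (p z)) + (e * a z + r z)\<^sup>2" for z
  proof -
    have "q z = (sqrt (p z) + (e * a z + r z))\<^sup>2" "p z = (sqrt (p z))\<^sup>2"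
      using p q by (auto simp: r_def)
    then show ?thesis by (simp add: power2_eq_square algebra_simps)
  qed
  have su: "integrable lam (\<lambda>z. (e * a z + 1 * r z)\<^sup>2)" by (rule square_integrable_lincomb[OF _ _ sa sr']) auto
  have int_ap: "integrable lam (\<lambda>z. a z * sqrt (p z))" and int_rp: "integrable lam (\<lambda>z. r z * sqrt (p z))"
    by (auto intro!: integrable_mult_if_square_integrable sa sr' sp)
  define U where "U = (\<integral>z. (e * a z + 1 * r z)\<^sup>2 \<partial>lam)"
  have "0 = (\<integral>z. q z - p z \<partial>lam)" using p q by simp
  also have "\<dots> = 2 * e * (\<integral>z. a z * sqrt (p z) \<partial>lam) + 2 * (\<integral>z. r z * sqrt (p z) \<partial>lam) + U"
    unfolding split U_def using int_ap int_rp su by simp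
  finally have "\<bar>2 * e * (\<integral>z. a z * sqrt (p z) \<partial>lam)\<bar> = \<bar>2 * (\<integral>z. r z * sqrt (p z) \<partial>lam) + U\<bar>"
    by (simp add: abs_minus_commute eq_neg_iff_add_eq_0[symmetric] add.assoc)
  moreover have "0 \<le> U" unfolding U_def by simp
  ultimately have "e * \<bar>2 * (\<integral>z. a z * sqrt (p z) \<partial>lam)\<bar> \<le> 2 * \<bar>\<integral>z. r z * sqrt (p z) \<partial>lam\<bar> + U"
    using e by (simp add: abs_mult)
  also have "\<dots> \<le> 2 * (sqrt Rr * 1) + (2 * e\<^sup>2 * A + 2 * 1\<^sup>2 * Rr)"
    using abs_integral_mult_le[of r lam "\<lambda>z. sqrt (p z)"] integral_square_lincomb_le[of a lam r e 1] sa sr' p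
    unfolding A_def Rr_def U_def by (intro add_mono) auto
  also have "\<dots> \<le> 2 * (\<delta> * e) + (2 * e\<^sup>2 * A + 2 * (\<delta> * e)\<^sup>2)"
    using sqrt_Rr small unfolding Rr_def r_def by simp
  also have "\<dots> \<le> e * (\<delta> * (4 + 2 * A))"
  proof -
    have "0 \<le> A" unfolding A_def by simp
    then have "e * (e * A) \<le> e * (\<delta> * A)" using e by (intro mult_left_mono mult_right_mono) auto
    moreover have "(\<delta> * e) * (\<delta> * e) \<le> \<delta> * e" using e by (intro mult_left_le mult_le_one) auto
    moreover have "e * (\<delta> * (4 + 2 * A)) = 4 * (\<delta> * e) + 2 * (e * (\<delta> * A))" by (simp add: algebra_simps)
    ultimately show ?thesis by (simp add: power2_eq_square algebra_simps)
  qed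
  finally show ?thesis using e unfolding A_def by simp
qed

lemma qmd_path_remainder_small:
  assumes qmd: "qmd_path lam Pm P Pe s" and "0 < \<delta>"
  shows "\<exists>e. 0 < e \<and> e \<le> \<delta> \<and> Pe e \<in> Pm \<and>
    (\<integral>\<^sup>+ z. ennreal ((sqrt (dens lam (Pe e) z) - sqrt (dens lam P z)
      - e * s z * sqrt (dens lam P z) / 2)\<^sup>2) \<partial>lam) \<le> ennreal ((\<delta> * e)\<^sup>2)"
proof -
  define R where "R e = (\<integral>\<^sup>+ z. ennreal ((sqrt (dens lam (Pe e) z) - sqrt (dens lam P z)
    - e * s z * sqrt (dens lam P z) / 2)\<^sup>2) \<partial>lam) / ennreal (e\<^sup>2)" for e
  have R_lim: "(R \<longlongrightarrow> 0) (at 0)" and Pe_ev: "\<forall>\<^sub>F e in nhds 0. Pe e \<in> Pm"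
    using qmd unfolding qmd_path_def R_def by auto
  have "\<forall>\<^sub>F e in at 0. R e < ennreal (\<delta>\<^sup>2)" by (rule order_tendstoD(2)[OF R_lim]) (use \<open>0 < \<delta>\<close> in simp)
  moreover have "\<forall>\<^sub>F e in at 0. Pe e \<in> Pm" using Pe_ev unfolding eventually_at_filter by eventually_elim auto
  ultimately have "\<forall>\<^sub>F e in at 0. R e < ennreal (\<delta>\<^sup>2) \<and> Pe e \<in> Pm" by (rule eventually_conj)
  then obtain d where "d > 0" and d: "\<And>x::real. x \<noteq> 0 \<Longrightarrow> dist x 0 < d \<Longrightarrow> R x < ennreal (\<delta>\<^sup>2) \<and> Pe x \<in> Pm"
    unfolding eventually_at by auto
  define e where "e = min d \<delta> / 2"
  have e: "0 < e" "e \<le> \<delta>" using \<open>d > 0\<close> \<open>0 < \<delta>\<close> by (auto simp: e_def)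
  have "R e < ennreal (\<delta>\<^sup>2)" and "Pe e \<in> Pm" using d[of e] e \<open>d > 0\<close> by (auto simp: e_def)
  then have "(\<integral>\<^sup>+ z. ennreal ((sqrt (dens lam (Pe e) z) - sqrt (dens lam P z)
      - e * s z * sqrt (dens lam P z) / 2)\<^sup>2) \<partial>lam) < ennreal (\<delta>\<^sup>2) * ennreal (e\<^sup>2)"
    unfolding R_def using e by (subst (asm) divide_less_ennreal) auto
  then show ?thesis using e \<open>Pe e \<in> Pm\<close> by (auto simp: power_mult_distrib ennreal_mult intro!: exI[of _ e])
qed

lemma eq_0_if_abs_le_small:
  fixes x K :: real
  assumes small: "\<And>\<delta>. 0 < \<delta> \<Longrightarrow> \<delta> \<le> 1 \<Longrightarrow> \<bar>x\<bar> \<le> \<delta> * K"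
  shows "x = 0"
proof -
  have "0 \<le> K" using small[of 1] by simp
  have "\<bar>x\<bar> \<le> 0 + \<epsilon>" if "0 < \<epsilon>" for \<epsilon>
  proof -
    have "\<bar>x\<bar> \<le> min 1 (\<epsilon> / (K + 1)) * K" using that \<open>0 \<le> K\<close> by (intro small) auto
    also have "\<dots> \<le> \<epsilon> / (K + 1) * (K + 1)" using that \<open>0 \<le> K\<close> by (intro mult_mono) auto
    finally show ?thesis using \<open>0 \<le> K\<close> by simp
  qed
  then show ?thesis using field_le_epsilon[of "\<bar>x\<bar>" 0] by simp
qed

lemma score_mean_zero:
  fixes lam :: "'z::topological_space measure"
  assumes lam: "sigma_finite_measure lam" "sets lam = sets borel"
    and model: "\<forall>P\<in>Pm. prob_space P \<and> sets P = sets borel \<and> absolutely_continuous lam P"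
    and P0: "P0 \<in> Pm" and qmd: "qmd_path lam Pm P0 Pe s"
  shows "(\<integral>z. s z \<partial>P0) = 0"
proof -
  define p where "p = dens lam P0"
  define a where "a z = s z * sqrt (p z) / 2" for z
  have "prob_space P0" "sets P0 = sets borel" "absolutely_continuous lam P0" using model P0 by auto
  note pf = dens_properties[OF lam this, folded p_def]
  have [measurable]: "p \<in> borel_measurable lam" and p_nonneg: "\<And>z. 0 \<le> p z" using pf by auto
  have "s \<in> borel_measurable P0" and ss: "integrable P0 (\<lambda>z. (s z)\<^sup>2)" using qmd unfolding qmd_path_def by auto
  moreover have "sets P0 = sets lam" using lam model P0 by simp
  ultimately have [measurable]: "s \<in> borel_measurable lam" by (simp cong: measurable_cong_sets)
  have [measurable]: "a \<in> borel_measurable lam" unfolding a_def by measurable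
  have "integrable (density lam (\<lambda>z. ennreal (p z))) (\<lambda>z. (s z)\<^sup>2 / 4)" using pf ss by simp
  then have "integrable lam (\<lambda>z. p z *\<^sub>R ((s z)\<^sup>2 / 4))" by (subst (asm) integrable_density) (auto simp: p_nonneg)
  moreover have "(\<lambda>z. p z *\<^sub>R ((s z)\<^sup>2 / 4)) = (\<lambda>z. (a z)\<^sup>2)"
    by (auto simp: a_def power_mult_distrib p_nonneg power2_eq_square)
  ultimately have sa: "integrable lam (\<lambda>z. (a z)\<^sup>2)" by simp
  have "(\<integral>z. s z \<partial>P0) = (\<integral>z. s z \<partial>(density lam (\<lambda>z. ennreal (p z))))" using pf by simp
  also have "\<dots> = (\<integral>z. p z *\<^sub>R s z \<partial>lam)" by (rule integral_density) (auto simp: p_nonneg)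
  also have "\<dots> = (\<integral>z. 2 * (a z * sqrt (p z)) \<partial>lam)"
    by (rule Bochner_Integration.integral_cong) (auto simp: a_def p_nonneg)
  finally have mean: "(\<integral>z. s z \<partial>P0) = 2 * (\<integral>z. a z * sqrt (p z) \<partial>lam)" by simp
  show ?thesis
  proof (rule eq_0_if_abs_le_small)
    fix \<delta> :: real assume \<delta>: "0 < \<delta>" "\<delta> \<le> 1"
    then obtain e where e: "0 < e" "e \<le> \<delta>" "Pe e \<in> Pm" and small: "(\<integral>\<^sup>+ z. ennreal ((sqrt (dens lam (Pe e) z)
        - sqrt (dens lam P0 z) - e * s z * sqrt (dens lam P0 z) / 2)\<^sup>2) \<partial>lam) \<le> ennreal ((\<delta> * e)\<^sup>2)"
      using qmd_path_remainder_small[OF qmd] by blast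
    then have "prob_space (Pe e)" "sets (Pe e) = sets borel" "absolutely_continuous lam (Pe e)" using model by auto
    note qf = dens_properties[OF lam this]
    define r where "r z = sqrt (dens lam (Pe e) z) - sqrt (p z) - e * a z" for z
    have [measurable]: "r \<in> borel_measurable lam" using qf unfolding r_def by measurable
    have "(\<integral>\<^sup>+ z. ennreal ((r z)\<^sup>2) \<partial>lam) \<le> ennreal ((\<delta> * e)\<^sup>2)"
      using small unfolding r_def p_def a_def by (simp add: algebra_simps)
    then have "integrable lam (\<lambda>z. (r z)\<^sup>2) \<and> (\<integral>z. (r z)\<^sup>2 \<partial>lam) \<le> (\<delta> * e)\<^sup>2"
      by (intro nn_integral_le_imp_integrable) auto
    then have "\<bar>2 * (\<integral>z. a z * sqrt (p z) \<partial>lam)\<bar> \<le> \<delta> * (4 + 2 * (\<integral>z. (a z)\<^sup>2 \<partial>lam))"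
      unfolding r_def using pf qf sa e \<delta>
      by (intro abs_integral_mult_sqrt_density_le[where q="dens lam (Pe e)"]) auto
    then show "\<bar>\<integral>z. s z \<partial>P0\<bar> \<le> \<delta> * (4 + 2 * (\<integral>z. (a z)\<^sup>2 \<partial>lam))" unfolding mean .
  qed
qed

section \<open>The tangent space\<close>

lemma lin_span_fun_induct [consumes 1, case_names zero add]:
  assumes "f \<in> lin_span_fun S"
    and zero: "P (\<lambda>z. 0)"
    and add: "\<And>f g c. P f \<Longrightarrow> g \<in> S \<Longrightarrow> P (\<lambda>z. f z + c * g z)"
  shows "P f"
proof -
  obtain k :: nat and c g where g: "\<forall>i<k. g i \<in> S" and f: "f = (\<lambda>z. \<Sum>i<k. c i * g i z)"
    using assms(1) unfolding lin_span_fun_def by blast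
  have "P (\<lambda>z. \<Sum>i<m. c i * g i z)" if "m \<le> k" for m
    using that
  proof (induction m)
    case 0
    then show ?case using zero by simp
  next
    case (Suc m)
    have "P (\<lambda>z. (\<Sum>i<m. c i * g i z) + c m * g m z)"
      by (rule add) (use Suc g in auto)
    then show ?case by simp
  qed
  then show ?thesis unfolding f by simp
qed

lemma lin_span_fun_zero: "(\<lambda>z. 0) \<in> lin_span_fun S"
  unfolding lin_span_fun_def by (intro CollectI exI[where x=0]) auto

lemma lin_span_fun_add_scaled:
  assumes "f \<in> lin_span_fun S" "g \<in> S"
  shows "(\<lambda>z. f z + c * g z) \<in> lin_span_fun S"
proof -
  obtain k :: nat and d h where h: "\<forall>i<k. h i \<in> S" and f: "f = (\<lambda>z. \<Sum>i<k. d i * h i z)"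
    using assms(1) unfolding lin_span_fun_def by blast
  have "\<forall>i<Suc k. (h(k := g)) i \<in> S" using h assms(2) by (auto simp: less_Suc_eq)
  moreover have "(\<lambda>z. f z + c * g z) = (\<lambda>z. \<Sum>i<Suc k. (d(k := c)) i * (h(k := g)) i z)"
    unfolding f by (auto intro!: sum.cong)
  ultimately show ?thesis unfolding lin_span_fun_def mem_Collect_eq
    by (intro exI[where x="Suc k"] exI[where x="d(k := c)"] exI[where x="h(k := g)"] conjI)
qed

lemma lin_span_fun_scale:
  assumes "f \<in> lin_span_fun S"
  shows "(\<lambda>z. a * f z) \<in> lin_span_fun S"
  using assms
proof (induction f rule: lin_span_fun_induct)
  case zero
  then show ?case using lin_span_fun_zero by simp
next
  case (add f g c)
  then have "(\<lambda>z. a * f z + (a * c) * g z) \<in> lin_span_fun S" by (rule lin_span_fun_add_scaled)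
  then show ?case by (simp add: algebra_simps)
qed

lemma lin_span_fun_lincomb:
  assumes "f \<in> lin_span_fun S" "g \<in> lin_span_fun S"
  shows "(\<lambda>z. a * f z + b * g z) \<in> lin_span_fun S"
  using assms(2)
proof (induction g rule: lin_span_fun_induct)
  case zero
  then show ?case using lin_span_fun_scale[OF assms(1)] by simp
next
  case (add g h c)
  then have "(\<lambda>z. (a * f z + b * g z) + (b * c) * h z) \<in> lin_span_fun S" by (rule lin_span_fun_add_scaled)
  then show ?case by (simp add: algebra_simps)
qed

lemma lin_span_fun_mean_zero:
  assumes "prob_space M"
    and S: "\<And>s. s \<in> S \<Longrightarrow> s \<in> borel_measurable M \<and> integrable M (\<lambda>z. (s z)\<^sup>2) \<and> (\<integral>z. s z \<partial>M) = 0"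
    and "f \<in> lin_span_fun S"
  shows "f \<in> borel_measurable M \<and> integrable M (\<lambda>z. (f z)\<^sup>2) \<and> (\<integral>z. f z \<partial>M) = 0"
  using assms(3)
proof (induction f rule: lin_span_fun_induct)
  case zero
  then show ?case by simp
next
  case (add f g c)
  interpret prob_space M by fact
  have [measurable]: "f \<in> borel_measurable M" "g \<in> borel_measurable M"
    and sq: "integrable M (\<lambda>z. (f z)\<^sup>2)" "integrable M (\<lambda>z. (g z)\<^sup>2)"
    and "(\<integral>z. f z \<partial>M) = 0" "(\<integral>z. g z \<partial>M) = 0"
    using add S by auto
  moreover have "integrable M f" "integrable M g"
    using sq by (auto intro: square_integrable_imp_integrable)
  ultimately show ?case using square_integrable_lincomb[of f M g 1 c] by simp
qed

locale dominated_model =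
  fixes lam :: "'z::topological_space measure" and Pm :: "'z measure set" and P0 :: "'z measure"
  assumes lam: "sigma_finite_measure lam" "sets lam = sets borel"
    and model: "\<forall>P\<in>Pm. prob_space P \<and> sets P = sets borel \<and> absolutely_continuous lam P"
    and P0: "P0 \<in> Pm"
begin

lemma prob_space_P0: "prob_space P0"
  using model P0 by auto

lemma lin_span_scores_mean_zero:
  assumes "f \<in> lin_span_fun (scores lam Pm P0)"
  shows "f \<in> borel_measurable P0 \<and> integrable P0 (\<lambda>z. (f z)\<^sup>2) \<and> (\<integral>z. f z \<partial>P0) = 0"
proof (rule lin_span_fun_mean_zero[OF prob_space_P0 _ assms])
  fix s assume "s \<in> scores lam Pm P0"
  then obtain Pe where "qmd_path lam Pm P0 Pe s" unfolding scores_def by auto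
  then show "s \<in> borel_measurable P0 \<and> integrable P0 (\<lambda>z. (s z)\<^sup>2) \<and> (\<integral>z. s z \<partial>P0) = 0"
    using score_mean_zero[OF lam model P0] unfolding qmd_path_def by auto
qed

lemma tangent_space_L2:
  assumes "g \<in> tangent_space lam Pm P0"
  shows "g \<in> borel_measurable P0" "integrable P0 (\<lambda>z. (g z)\<^sup>2)"
  using assms unfolding tangent_space_def by auto

lemma zero_mem_tangent_space: "(\<lambda>z. 0) \<in> tangent_space lam Pm P0"
  unfolding tangent_space_def using lin_span_fun_zero by force

lemma tangent_space_lincomb:
  assumes f: "f \<in> tangent_space lam Pm P0" and g: "g \<in> tangent_space lam Pm P0"
  shows "(\<lambda>z. a * f z + b * g z) \<in> tangent_space lam Pm P0"
proof -
  have [measurable]: "f \<in> borel_measurable P0" "g \<in> borel_measurable P0"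
    and sf: "integrable P0 (\<lambda>z. (f z)\<^sup>2)" and sg: "integrable P0 (\<lambda>z. (g z)\<^sup>2)"
    using tangent_space_L2 f g by auto
  have "\<exists>h\<in>lin_span_fun (scores lam Pm P0). (\<integral>z. (a * f z + b * g z - h z)\<^sup>2 \<partial>P0) < e" if "e > 0" for e
  proof -
    define c where "c = 2 * (a\<^sup>2 + b\<^sup>2)"
    define E where "E = e / (c + 1)"
    have c: "0 \<le> c" unfolding c_def by simp
    have "E > 0" unfolding E_def using \<open>e > 0\<close> c by simp
    then obtain f' where f': "f' \<in> lin_span_fun (scores lam Pm P0)" "(\<integral>z. (f z - f' z)\<^sup>2 \<partial>P0) < E"
      using f unfolding tangent_space_def by blast
    obtain g' where g': "g' \<in> lin_span_fun (scores lam Pm P0)" "(\<integral>z. (g z - g' z)\<^sup>2 \<partial>P0) < E"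
      using g \<open>E > 0\<close> unfolding tangent_space_def by blast
    have [measurable]: "f' \<in> borel_measurable P0" "g' \<in> borel_measurable P0"
      and sf': "integrable P0 (\<lambda>z. (f' z)\<^sup>2)" and sg': "integrable P0 (\<lambda>z. (g' z)\<^sup>2)"
      using lin_span_scores_mean_zero f'(1) g'(1) by auto
    have "(\<integral>z. (a * f z + b * g z - (a * f' z + b * g' z))\<^sup>2 \<partial>P0)
        = (\<integral>z. (a * (f z - f' z) + b * (g z - g' z))\<^sup>2 \<partial>P0)"
      by (simp add: algebra_simps)
    also have "\<dots> \<le> 2 * a\<^sup>2 * (\<integral>z. (f z - f' z)\<^sup>2 \<partial>P0) + 2 * b\<^sup>2 * (\<integral>z. (g z - g' z)\<^sup>2 \<partial>P0)"
      using sf sg sf' sg' by (intro integral_square_lincomb_le square_integrable_diff) auto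
    also have "\<dots> \<le> c * E"
      using f'(2) g'(2) unfolding c_def by (simp add: distrib_left distrib_right add_mono mult_left_mono)
    also have "\<dots> < e" unfolding E_def using c \<open>e > 0\<close> by (simp add: field_simps)
    finally show ?thesis using lin_span_fun_lincomb[OF f'(1) g'(1), of a b]
      by (auto intro!: bexI[where x="\<lambda>z. a * f' z + b * g' z"])
  qed
  then show ?thesis unfolding tangent_space_def using square_integrable_lincomb[OF _ _ sf sg] by auto
qed

lemma tangent_space_closed:
  assumes [measurable]: "g \<in> borel_measurable P0" and sg: "integrable P0 (\<lambda>z. (g z)\<^sup>2)"
    and approx: "\<forall>e>0. \<exists>f\<in>tangent_space lam Pm P0. (\<integral>z. (g z - f z)\<^sup>2 \<partial>P0) < e"
  shows "g \<in> tangent_space lam Pm P0"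
proof -
  have "\<exists>h\<in>lin_span_fun (scores lam Pm P0). (\<integral>z. (g z - h z)\<^sup>2 \<partial>P0) < e" if "e > 0" for e
  proof -
    have "e / 4 > 0" using \<open>e > 0\<close> by simp
    then obtain f where f: "f \<in> tangent_space lam Pm P0" "(\<integral>z. (g z - f z)\<^sup>2 \<partial>P0) < e / 4"
      using approx by blast
    obtain h where h: "h \<in> lin_span_fun (scores lam Pm P0)" "(\<integral>z. (f z - h z)\<^sup>2 \<partial>P0) < e / 4"
      using f(1) \<open>e / 4 > 0\<close> unfolding tangent_space_def by blast
    have [measurable]: "f \<in> borel_measurable P0" "h \<in> borel_measurable P0"
      and sf: "integrable P0 (\<lambda>z. (f z)\<^sup>2)" and sh: "integrable P0 (\<lambda>z. (h z)\<^sup>2)"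
      using tangent_space_L2[OF f(1)] lin_span_scores_mean_zero[OF h(1)] by auto
    have "(\<integral>z. (g z - h z)\<^sup>2 \<partial>P0) = (\<integral>z. (1 * (g z - f z) + 1 * (f z - h z))\<^sup>2 \<partial>P0)" by simp
    also have "\<dots> \<le> 2 * 1\<^sup>2 * (\<integral>z. (g z - f z)\<^sup>2 \<partial>P0) + 2 * 1\<^sup>2 * (\<integral>z. (f z - h z)\<^sup>2 \<partial>P0)"
      using sg sf sh by (intro integral_square_lincomb_le square_integrable_diff) auto
    also have "\<dots> < e" using f(2) h(2) by simp
    finally show ?thesis using h(1) by blast
  qed
  then show ?thesis unfolding tangent_space_def using sg by auto
qed

lemma tangent_space_mean_zero:
  assumes g: "g \<in> tangent_space lam Pm P0"
  shows "(\<integral>z. g z \<partial>P0) = 0"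
proof (rule ccontr)
  interpret prob_space P0 by (rule prob_space_P0)
  assume "(\<integral>z. g z \<partial>P0) \<noteq> 0"
  then have "(\<integral>z. g z \<partial>P0)\<^sup>2 > 0" by simp
  then obtain h where h: "h \<in> lin_span_fun (scores lam Pm P0)" "(\<integral>z. (g z - h z)\<^sup>2 \<partial>P0) < (\<integral>z. g z \<partial>P0)\<^sup>2"
    using g unfolding tangent_space_def by blast
  have [measurable]: "g \<in> borel_measurable P0" "h \<in> borel_measurable P0"
    and sg: "integrable P0 (\<lambda>z. (g z)\<^sup>2)" and sh: "integrable P0 (\<lambda>z. (h z)\<^sup>2)"
    and "(\<integral>z. h z \<partial>P0) = 0"
    using tangent_space_L2[OF g] lin_span_scores_mean_zero[OF h(1)] by auto
  moreover have "integrable P0 g" "integrable P0 h"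
    using sg sh by (auto intro: square_integrable_imp_integrable)
  ultimately have "\<bar>\<integral>z. g z \<partial>P0\<bar> = \<bar>\<integral>z. (g z - h z) * 1 \<partial>P0\<bar>" by simp
  also have "\<dots> \<le> sqrt (\<integral>z. (g z - h z)\<^sup>2 \<partial>P0) * sqrt (\<integral>z. 1\<^sup>2 \<partial>P0)"
    using sg sh by (intro abs_integral_mult_le square_integrable_diff) auto
  also have "\<dots> < \<bar>\<integral>z. g z \<partial>P0\<bar>"
    using real_sqrt_less_mono[OF h(2)] by (simp add: prob_space)
  finally show False by simp
qed

end

context dominated_model
begin

lemma pd_op_deriv:
  assumes "pathwise_differentiable lam Pm nu P0"
  shows "pd_deriv lam Pm nu P0 (pd_op lam Pm nu P0)"
  using assms unfolding pathwise_differentiable_def pd_op_def by (rule someI_ex)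

lemma pd_op_bounded:
  fixes nu :: "'z measure \<Rightarrow> 'h::real_normed_vector"
  assumes "pathwise_differentiable lam Pm nu P0"
  obtains C where "C \<ge> 0" "\<And>f. f \<in> tangent_space lam Pm P0 \<Longrightarrow>
      norm (pd_op lam Pm nu P0 f) \<le> C * sqrt (\<integral>z. (f z)\<^sup>2 \<partial>P0)"
proof -
  obtain C where C: "\<forall>f\<in>tangent_space lam Pm P0. norm (pd_op lam Pm nu P0 f) \<le> C * sqrt (\<integral>z. (f z)\<^sup>2 \<partial>P0)"
    using pd_op_deriv[OF assms] unfolding pd_deriv_def by blast
  show ?thesis
  proof (rule that[of "max C 0"])
    fix f assume "f \<in> tangent_space lam Pm P0"
    then have "norm (pd_op lam Pm nu P0 f) \<le> C * sqrt (\<integral>z. (f z)\<^sup>2 \<partial>P0)" using C by blast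
    also have "\<dots> \<le> max C 0 * sqrt (\<integral>z. (f z)\<^sup>2 \<partial>P0)" by (intro mult_right_mono) auto
    finally show "norm (pd_op lam Pm nu P0 f) \<le> max C 0 * sqrt (\<integral>z. (f z)\<^sup>2 \<partial>P0)" .
  qed simp
qed

lemma eio_represents:
  fixes nu :: "'z measure \<Rightarrow> 'h::real_inner"
  assumes pd: "pathwise_differentiable lam Pm nu P0"
  shows "eio lam Pm nu P0 h \<in> tangent_space lam Pm P0"
    "\<And>s. s \<in> tangent_space lam Pm P0 \<Longrightarrow>
       inner (pd_op lam Pm nu P0 s) h = (\<integral>z. s z * eio lam Pm nu P0 h z \<partial>P0)"
proof -
  define D where "D = pd_op lam Pm nu P0"
  define T where "T = tangent_space lam Pm P0"
  obtain C where "C \<ge> 0" and C: "\<And>f. f \<in> T \<Longrightarrow> norm (D f) \<le> C * sqrt (\<integral>z. (f z)\<^sup>2 \<partial>P0)"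
    using pd_op_bounded[OF pd] unfolding D_def T_def by blast
  have "L2_subspace_functional P0 T (\<lambda>s. inner (D s) h) (C * norm h)"
  proof (rule L2_subspace_functional.intro)
    show "\<And>f g a b. f \<in> T \<Longrightarrow> g \<in> T \<Longrightarrow>
        inner (D (\<lambda>z. a * f z + b * g z)) h = a * inner (D f) h + b * inner (D g) h"
      using pd_op_deriv[OF pd] unfolding pd_deriv_def D_def T_def by (simp add: inner_add_left)
    show "\<bar>inner (D f) h\<bar> \<le> C * norm h * sqrt (\<integral>z. (f z)\<^sup>2 \<partial>P0)" if "f \<in> T" for f
    proof -
      have "\<bar>inner (D f) h\<bar> \<le> norm (D f) * norm h" by (rule Cauchy_Schwarz_ineq2)
      also have "\<dots> \<le> C * sqrt (\<integral>z. (f z)\<^sup>2 \<partial>P0) * norm h" by (intro mult_right_mono C that) simp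
      finally show ?thesis by (simp add: ac_simps)
    qed
  qed (simp_all only: T_def prob_space_P0 tangent_space_L2 zero_mem_tangent_space
        tangent_space_lincomb tangent_space_closed)
  then interpret L2_subspace_functional P0 T "\<lambda>s. inner (D s) h" "C * norm h" .
  have "\<exists>g. g \<in> T \<and> (\<forall>s\<in>T. inner (D s) h = (\<integral>z. s z * g z \<partial>P0))"
    using riesz_representation by blast
  from someI_ex[OF this]
  show "eio lam Pm nu P0 h \<in> tangent_space lam Pm P0"
    "\<And>s. s \<in> tangent_space lam Pm P0 \<Longrightarrow>
       inner (pd_op lam Pm nu P0 s) h = (\<integral>z. s z * eio lam Pm nu P0 h z \<partial>P0)"
    unfolding eio_def D_def T_def by auto
qed

lemma eio_bounded:
  fixes nu :: "'z measure \<Rightarrow> 'h::real_inner"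
  assumes pd: "pathwise_differentiable lam Pm nu P0"
  obtains C where "C \<ge> 0" "\<And>h. (\<integral>z. (eio lam Pm nu P0 h z)\<^sup>2 \<partial>P0) \<le> C\<^sup>2 * (norm h)\<^sup>2"
proof -
  obtain C where "C \<ge> 0" and C: "\<And>f. f \<in> tangent_space lam Pm P0 \<Longrightarrow>
      norm (pd_op lam Pm nu P0 f) \<le> C * sqrt (\<integral>z. (f z)\<^sup>2 \<partial>P0)"
    using pd_op_bounded[OF pd] by blast
  have "(\<integral>z. (eio lam Pm nu P0 h z)\<^sup>2 \<partial>P0) \<le> C\<^sup>2 * (norm h)\<^sup>2" for h
  proof -
    define g where "g = eio lam Pm nu P0 h"
    define x where "x = sqrt (\<integral>z. (g z)\<^sup>2 \<partial>P0)"
    have gT: "g \<in> tangent_space lam Pm P0" unfolding g_def by (rule eio_represents(1)[OF pd])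
    have "x\<^sup>2 = inner (pd_op lam Pm nu P0 g) h"
      unfolding x_def g_def eio_represents(2)[OF pd gT[unfolded g_def]] by (simp add: power2_eq_square)
    also have "\<dots> \<le> norm (pd_op lam Pm nu P0 g) * norm h" by (rule norm_cauchy_schwarz)
    also have "\<dots> \<le> C * x * norm h" unfolding x_def by (intro mult_right_mono C gT) simp
    finally have "x * x \<le> x * (C * norm h)" by (simp add: power2_eq_square ac_simps)
    moreover have "0 \<le> x" unfolding x_def by simp
    ultimately have "x \<le> C * norm h"
      using \<open>C \<ge> 0\<close> by (cases "x = 0") (auto simp: mult_le_cancel_left)
    then have "x\<^sup>2 \<le> (C * norm h)\<^sup>2" unfolding x_def by (intro power_mono) auto
    then show ?thesis unfolding x_def g_def by (simp add: power_mult_distrib)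
  qed
  then show ?thesis using that[OF \<open>C \<ge> 0\<close>] by blast
qed

end

section \<open>Series along an orthogonal sequence\<close>

lemma norm_sum_orthogonal_squared:
  fixes e :: "nat \<Rightarrow> 'h::real_inner"
  assumes orth: "\<forall>j k. j \<noteq> k \<longrightarrow> inner (e j) (e k) = 0"
  shows "(norm (\<Sum>k\<in>F. d k *\<^sub>R e k))\<^sup>2 = (\<Sum>k\<in>F. (d k)\<^sup>2 * (norm (e k))\<^sup>2)"
proof (cases "finite F")
  case True
  have "(norm (\<Sum>k\<in>F. d k *\<^sub>R e k))\<^sup>2 = inner (\<Sum>j\<in>F. d j *\<^sub>R e j) (\<Sum>k\<in>F. d k *\<^sub>R e k)"
    by (simp add: power2_norm_eq_inner)
  also have "\<dots> = (\<Sum>j\<in>F. \<Sum>k\<in>F. d j * d k * inner (e j) (e k))"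
    unfolding inner_sum_left unfolding inner_sum_right by (simp add: sum_distrib_left mult.assoc mult.left_commute)
  also have "\<dots> = (\<Sum>j\<in>F. \<Sum>k\<in>F. if k = j then d j * d k * (norm (e j))\<^sup>2 else 0)"
    using orth by (intro sum.cong refl) (auto simp: power2_norm_eq_inner)
  also have "\<dots> = (\<Sum>j\<in>F. (d j)\<^sup>2 * (norm (e j))\<^sup>2)"
    using True by (simp add: sum.delta' power2_eq_square)
  finally show ?thesis .
qed simp

lemma sums_norm_squared_orthogonal:
  fixes e :: "nat \<Rightarrow> 'h::real_inner"
  assumes orth: "\<forall>j k. j \<noteq> k \<longrightarrow> inner (e j) (e k) = 0"
    and "(\<lambda>k. d k *\<^sub>R e k) sums x"
  shows "(\<lambda>k. (d k)\<^sup>2 * (norm (e k))\<^sup>2) sums (norm x)\<^sup>2"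
proof -
  have "(\<lambda>n. (norm (\<Sum>k<n. d k *\<^sub>R e k))\<^sup>2) \<longlonglongrightarrow> (norm x)\<^sup>2"
    using assms(2) unfolding sums_def by (intro tendsto_intros)
  then show ?thesis unfolding sums_def norm_sum_orthogonal_squared[OF orth] .
qed

lemma summable_orthogonal_iff:
  fixes e :: "nat \<Rightarrow> 'h::{real_inner,banach}"
  assumes orth: "\<forall>j k. j \<noteq> k \<longrightarrow> inner (e j) (e k) = 0"
  shows "summable (\<lambda>k. d k *\<^sub>R e k) \<longleftrightarrow> summable (\<lambda>k. (d k)\<^sup>2 * (norm (e k))\<^sup>2)"
proof
  assume "summable (\<lambda>k. d k *\<^sub>R e k)"
  then show "summable (\<lambda>k. (d k)\<^sup>2 * (norm (e k))\<^sup>2)"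
    using sums_norm_squared_orthogonal[OF orth] by (auto simp: summable_def)
next
  assume sq: "summable (\<lambda>k. (d k)\<^sup>2 * (norm (e k))\<^sup>2)"
  show "summable (\<lambda>k. d k *\<^sub>R e k)"
    unfolding summable_Cauchy
  proof (intro allI impI)
    fix r :: real assume "r > 0"
    then have "r\<^sup>2 > 0" by simp
    then obtain N where N: "\<forall>m\<ge>N. \<forall>n. norm (\<Sum>k\<in>{m..<n}. (d k)\<^sup>2 * (norm (e k))\<^sup>2) < r\<^sup>2"
      using sq unfolding summable_Cauchy by blast
    have "norm (\<Sum>k\<in>{m..<n}. d k *\<^sub>R e k) < r" if "m \<ge> N" for m n
    proof -
      have "(norm (\<Sum>k\<in>{m..<n}. d k *\<^sub>R e k))\<^sup>2 \<le> norm (\<Sum>k\<in>{m..<n}. (d k)\<^sup>2 * (norm (e k))\<^sup>2)"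
        unfolding norm_sum_orthogonal_squared[OF orth] by simp
      also have "\<dots> < r\<^sup>2" using N that by blast
      finally show ?thesis using \<open>r > 0\<close> by (simp add: power_less_imp_less_base less_imp_le)
    qed
    then show "\<exists>N. \<forall>m\<ge>N. \<forall>n. norm (\<Sum>k\<in>{m..<n}. d k *\<^sub>R e k) < r" by blast
  qed
qed

lemma inner_sums_orthogonal:
  fixes e :: "nat \<Rightarrow> 'h::real_inner"
  assumes orth: "\<forall>j k. j \<noteq> k \<longrightarrow> inner (e j) (e k) = 0"
    and "(\<lambda>k. d k *\<^sub>R e k) sums x"
  shows "inner x (e j) = d j * (norm (e j))\<^sup>2"
proof -
  have "(\<lambda>k. inner (d k *\<^sub>R e k) (e j)) sums inner x (e j)"
    by (rule bounded_linear.sums[OF bounded_linear_inner_left assms(2)])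
  moreover have "(\<lambda>k. inner (d k *\<^sub>R e k) (e j)) = (\<lambda>k. if k = j then d j * (norm (e j))\<^sup>2 else 0)"
    using orth by (auto simp: power2_norm_eq_inner)
  ultimately have "(\<lambda>k. if k = j then d j * (norm (e j))\<^sup>2 else 0) sums inner x (e j)" by simp
  moreover have "(\<lambda>k. if k = j then d j * (norm (e j))\<^sup>2 else 0) sums (d j * (norm (e j))\<^sup>2)"
    by (rule sums_single)
  ultimately show ?thesis by (rule sums_unique2)
qed

lemma ennreal_norm_squared_le_suminf:
  fixes e :: "nat \<Rightarrow> 'h::real_inner"
  assumes orth: "\<forall>j k. j \<noteq> k \<longrightarrow> inner (e j) (e k) = 0"
    and unit: "\<forall>k. e k = 0 \<or> norm (e k) = 1"
    and "(\<lambda>k. d k *\<^sub>R e k) sums x"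
  shows "ennreal ((norm x)\<^sup>2) \<le> (\<Sum>k. ennreal ((d k)\<^sup>2))"
proof -
  have "ennreal ((norm x)\<^sup>2) = (\<Sum>k. ennreal ((d k)\<^sup>2 * (norm (e k))\<^sup>2))"
    by (rule suminf_ennreal_eq[OF _ sums_norm_squared_orthogonal[OF orth assms(3)], symmetric]) simp
  also have "\<dots> \<le> (\<Sum>k. ennreal ((d k)\<^sup>2))"
  proof (intro suminf_le allI ennreal_leI)
    fix k
    have "(norm (e k))\<^sup>2 \<le> 1" using unit[rule_format, of k] by auto
    then show "(d k)\<^sup>2 * (norm (e k))\<^sup>2 \<le> (d k)\<^sup>2" by (simp add: mult_left_le)
  qed auto
  finally show ?thesis .
qed

lemma summable_iff_suminf_ennreal_neq_top:
  fixes f :: "nat \<Rightarrow> real"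
  assumes "\<And>k. 0 \<le> f k"
  shows "summable f \<longleftrightarrow> (\<Sum>k. ennreal (f k)) \<noteq> \<top>"
  using summable_suminf_not_top[of f] ennreal_suminf_neq_top[of f] assms by blast

locale differentiable_functional = dominated_model lam Pm P0
  for lam :: "'z::topological_space measure" and Pm P0 +
  fixes nu :: "'z measure \<Rightarrow> 'h::{real_inner,banach,second_countable_topology}" and hb :: "nat \<Rightarrow> 'h"
  assumes pd: "pathwise_differentiable lam Pm nu P0"
    and unit: "\<forall>k. hb k = 0 \<or> norm (hb k) = 1"
    and orth: "\<forall>j k. j \<noteq> k \<longrightarrow> inner (hb j) (hb k) = 0"
    and basis_expansion: "\<forall>x. (\<lambda>k. inner x (hb k) *\<^sub>R hb k) sums x"
begin

definition eif_coord :: "nat \<Rightarrow> 'z \<Rightarrow> real" where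
  "eif_coord k = eio lam Pm nu P0 (hb k)"

lemma eif_coord_tangent: "eif_coord k \<in> tangent_space lam Pm P0"
  unfolding eif_coord_def by (rule eio_represents(1)[OF pd])

lemma eif_coord_measurable[measurable]: "eif_coord k \<in> borel_measurable P0"
  and square_integrable_eif_coord: "integrable P0 (\<lambda>z. (eif_coord k z)\<^sup>2)"
  using tangent_space_L2[OF eif_coord_tangent] by auto

lemma integral_eif_coord: "(\<integral>z. eif_coord k z \<partial>P0) = 0"
  by (rule tangent_space_mean_zero[OF eif_coord_tangent])

definition eio_bound :: real where
  "eio_bound = (SOME C. \<forall>h. (\<integral>z. (eio lam Pm nu P0 h z)\<^sup>2 \<partial>P0) \<le> C\<^sup>2 * (norm h)\<^sup>2)"

lemma integral_eio_squared_le: "(\<integral>z. (eio lam Pm nu P0 h z)\<^sup>2 \<partial>P0) \<le> eio_bound\<^sup>2 * (norm h)\<^sup>2"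
proof -
  have "\<exists>C. \<forall>h. (\<integral>z. (eio lam Pm nu P0 h z)\<^sup>2 \<partial>P0) \<le> C\<^sup>2 * (norm h)\<^sup>2"
    using eio_bounded[OF pd] by metis
  from someI_ex[OF this] show ?thesis unfolding eio_bound_def by blast
qed

lemma integral_eif_coord_squared_le: "(\<integral>z. (eif_coord k z)\<^sup>2 \<partial>P0) \<le> eio_bound\<^sup>2"
proof -
  have "(\<integral>z. (eif_coord k z)\<^sup>2 \<partial>P0) \<le> eio_bound\<^sup>2 * (norm (hb k))\<^sup>2"
    unfolding eif_coord_def by (rule integral_eio_squared_le)
  also have "\<dots> \<le> eio_bound\<^sup>2" using unit[rule_format, of k] by auto
  finally show ?thesis .
qed

lemma reg_eif_P0:
  "reg_eif lam Pm nu hb P0 beta z = (if summable (\<lambda>k. (beta k * eif_coord k z) *\<^sub>R hb k)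
      then (\<Sum>k. (beta k * eif_coord k z) *\<^sub>R hb k) else 0)"
  unfolding reg_eif_def eif_coord_def ..

definition eif_summable_set :: "(nat \<Rightarrow> real) \<Rightarrow> 'z set" where
  "eif_summable_set beta = {z. summable (\<lambda>k. (beta k * eif_coord k z) *\<^sub>R hb k)}"

lemma reg_eif_sums:
  assumes "z \<in> eif_summable_set beta"
  shows "(\<lambda>k. (beta k * eif_coord k z) *\<^sub>R hb k) sums reg_eif lam Pm nu hb P0 beta z"
  using assms unfolding reg_eif_P0 eif_summable_set_def by (simp add: summable_sums)

lemma eif_summable_set_sets: "eif_summable_set beta \<inter> space P0 \<in> sets P0"
proof -
  have "summable (\<lambda>k. (beta k * eif_coord k z) *\<^sub>R hb k)
      \<longleftrightarrow> (\<Sum>k. ennreal ((beta k * eif_coord k z)\<^sup>2 * (norm (hb k))\<^sup>2)) \<noteq> \<top>" for z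
    unfolding summable_orthogonal_iff[OF orth] by (rule summable_iff_suminf_ennreal_neq_top) simp
  then have "eif_summable_set beta \<inter> space P0
      = {z \<in> space P0. (\<Sum>k. ennreal ((beta k * eif_coord k z)\<^sup>2 * (norm (hb k))\<^sup>2)) \<noteq> \<top>}"
    unfolding eif_summable_set_def by auto
  also have "\<dots> \<in> sets P0" by measurable
  finally show ?thesis .
qed

lemma reg_eif_measurable[measurable]: "reg_eif lam Pm nu hb P0 beta \<in> borel_measurable P0"
proof -
  have "reg_eif lam Pm nu hb P0 beta
      = (\<lambda>z. if z \<in> eif_summable_set beta then (\<Sum>k. (beta k * eif_coord k z) *\<^sub>R hb k) else 0)"
    unfolding reg_eif_P0 eif_summable_set_def by auto
  also have "\<dots> \<in> borel_measurable P0" by (rule measurable_If_set[OF _ _ eif_summable_set_sets]) auto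
  finally show ?thesis .
qed

lemma ennreal_norm_reg_eif_squared_le:
  "ennreal ((norm (reg_eif lam Pm nu hb P0 beta z))\<^sup>2) \<le> (\<Sum>k. ennreal ((beta k * eif_coord k z)\<^sup>2))"
proof (cases "z \<in> eif_summable_set beta")
  case True
  then show ?thesis by (rule ennreal_norm_squared_le_suminf[OF orth unit reg_eif_sums])
next
  case False
  then show ?thesis unfolding reg_eif_P0 eif_summable_set_def by simp
qed

lemma nn_integral_suminf_eif_coord_le:
  assumes "summable (\<lambda>k. (beta k)\<^sup>2)"
  shows "(\<integral>\<^sup>+z. (\<Sum>k. ennreal ((beta k * eif_coord k z)\<^sup>2)) \<partial>P0) \<le> ennreal (eio_bound\<^sup>2 * (\<Sum>k. (beta k)\<^sup>2))"
proof -
  have "(\<integral>\<^sup>+z. (\<Sum>k. ennreal ((beta k * eif_coord k z)\<^sup>2)) \<partial>P0) = (\<Sum>k. \<integral>\<^sup>+z. ennreal ((beta k * eif_coord k z)\<^sup>2) \<partial>P0)"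
    by (rule nn_integral_suminf) measurable
  also have "\<dots> \<le> (\<Sum>k. ennreal (eio_bound\<^sup>2 * (beta k)\<^sup>2))"
  proof (intro suminf_le allI)
    fix k
    have "(\<integral>\<^sup>+z. ennreal ((beta k * eif_coord k z)\<^sup>2) \<partial>P0) = ennreal ((beta k)\<^sup>2 * (\<integral>z. (eif_coord k z)\<^sup>2 \<partial>P0))"
      using square_integrable_eif_coord by (subst nn_integral_eq_integral) (auto simp: power_mult_distrib)
    also have "\<dots> \<le> ennreal (eio_bound\<^sup>2 * (beta k)\<^sup>2)"
      using integral_eif_coord_squared_le by (intro ennreal_leI) (simp add: mult.commute mult_left_mono)
    finally show "(\<integral>\<^sup>+z. ennreal ((beta k * eif_coord k z)\<^sup>2) \<partial>P0) \<le> ennreal (eio_bound\<^sup>2 * (beta k)\<^sup>2)" .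
  qed auto
  also have "\<dots> = ennreal (\<Sum>k. eio_bound\<^sup>2 * (beta k)\<^sup>2)"
    by (rule suminf_ennreal2) (auto intro: summable_mult assms)
  also have "\<dots> = ennreal (eio_bound\<^sup>2 * (\<Sum>k. (beta k)\<^sup>2))" using assms by (simp add: suminf_mult)
  finally show ?thesis .
qed

lemma AE_eif_summable:
  assumes "summable (\<lambda>k. (beta k)\<^sup>2)"
  shows "AE z in P0. z \<in> eif_summable_set beta"
proof -
  have "AE z in P0. (\<Sum>k. ennreal ((beta k * eif_coord k z)\<^sup>2)) \<noteq> \<infinity>"
    by (rule nn_integral_PInf_AE) (use nn_integral_suminf_eif_coord_le[OF assms] in \<open>auto simp: top_unique\<close>)
  then show ?thesis
  proof eventually_elim
    case (elim z)
    then have "summable (\<lambda>k. (beta k * eif_coord k z)\<^sup>2)" by (intro summable_suminf_not_top) auto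
    then have "summable (\<lambda>k. (beta k * eif_coord k z)\<^sup>2 * (norm (hb k))\<^sup>2)"
    proof (rule summable_comparison_test[rotated], intro exI allI impI)
      fix k
      have "(norm (hb k))\<^sup>2 \<le> 1" using unit[rule_format, of k] by auto
      then show "norm ((beta k * eif_coord k z)\<^sup>2 * (norm (hb k))\<^sup>2) \<le> (beta k * eif_coord k z)\<^sup>2"
        by (simp add: mult_left_le)
    qed
    then show ?case unfolding eif_summable_set_def summable_orthogonal_iff[OF orth] by simp
  qed
qed

lemma integrable_reg_eif:
  assumes "summable (\<lambda>k. (beta k)\<^sup>2)"
  shows "integrable P0 (reg_eif lam Pm nu hb P0 beta)"
proof (rule integrableI_bounded)
  interpret prob_space P0 by (rule prob_space_P0)
  have "(\<integral>\<^sup>+z. ennreal (norm (reg_eif lam Pm nu hb P0 beta z)) \<partial>P0)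
        \<le> (\<integral>\<^sup>+z. 1 + (\<Sum>k. ennreal ((beta k * eif_coord k z)\<^sup>2)) \<partial>P0)"
  proof (rule nn_integral_mono)
    fix z
    define x where "x = norm (reg_eif lam Pm nu hb P0 beta z)"
    have "0 \<le> x" unfolding x_def by simp
    then have "x \<le> 1 + x\<^sup>2" using sum_squares_bound[of 1 x] by simp
    then have "ennreal x \<le> ennreal (1 + x\<^sup>2)" by (rule ennreal_leI)
    also have "\<dots> = 1 + ennreal (x\<^sup>2)" by (simp add: ennreal_plus)
    also have "\<dots> \<le> 1 + (\<Sum>k. ennreal ((beta k * eif_coord k z)\<^sup>2))"
      using ennreal_norm_reg_eif_squared_le unfolding x_def by (rule add_left_mono)
    finally show "ennreal (norm (reg_eif lam Pm nu hb P0 beta z)) \<le> 1 + (\<Sum>k. ennreal ((beta k * eif_coord k z)\<^sup>2))"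
      unfolding x_def .
  qed
  also have "\<dots> = (\<integral>\<^sup>+z. 1 \<partial>P0) + (\<integral>\<^sup>+z. (\<Sum>k. ennreal ((beta k * eif_coord k z)\<^sup>2)) \<partial>P0)"
    by (rule nn_integral_add) auto
  also have "\<dots> \<le> 1 + ennreal (eio_bound\<^sup>2 * (\<Sum>k. (beta k)\<^sup>2))"
    using nn_integral_suminf_eif_coord_le[OF assms] by (intro add_mono) (auto simp: emeasure_space_1)
  also have "\<dots> < \<infinity>" by (simp add: ennreal_plus[symmetric] del: ennreal_plus)
  finally show "(\<integral>\<^sup>+z. ennreal (norm (reg_eif lam Pm nu hb P0 beta z)) \<partial>P0) < \<infinity>" .
qed (rule reg_eif_measurable)

text \<open>Each coordinate \<open>\<langle>P\<^sub>0 \<phi>\<^sub>0, h\<^sub>j\<rangle> = \<beta>\<^sub>j \<parallel>h\<^sub>j\<parallel>\<^sup>2 P\<^sub>0 \<nu>\<^sup>*(h\<^sub>j)\<close> vanishes, and the basis is complete.\<close>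

lemma integral_reg_eif:
  assumes "summable (\<lambda>k. (beta k)\<^sup>2)"
  shows "(\<integral>z. reg_eif lam Pm nu hb P0 beta z \<partial>P0) = 0"
proof -
  define x where "x = (\<integral>z. reg_eif lam Pm nu hb P0 beta z \<partial>P0)"
  have "inner x (hb j) = 0" for j
  proof -
    have "inner x (hb j) = (\<integral>z. inner (reg_eif lam Pm nu hb P0 beta z) (hb j) \<partial>P0)"
      unfolding x_def
      by (rule integral_bounded_linear[OF bounded_linear_inner_left integrable_reg_eif[OF assms], symmetric])
    also have "\<dots> = (\<integral>z. (beta j * (norm (hb j))\<^sup>2) * eif_coord j z \<partial>P0)"
    proof (rule integral_cong_AE)
      show "AE z in P0. inner (reg_eif lam Pm nu hb P0 beta z) (hb j) = (beta j * (norm (hb j))\<^sup>2) * eif_coord j z"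
        using AE_eif_summable[OF assms]
      proof eventually_elim
        case (elim z)
        from inner_sums_orthogonal[OF orth reg_eif_sums[OF elim]] show ?case by simp
      qed
    qed measurable
    also have "\<dots> = 0" using integral_eif_coord[of j] by simp
    finally show ?thesis .
  qed
  then have "(\<lambda>k. inner x (hb k) *\<^sub>R hb k) = (\<lambda>k. 0)" by simp
  then have "(\<lambda>k. 0) sums x" using basis_expansion by metis
  then show ?thesis unfolding x_def using sums_zero sums_unique2 by blast
qed

end

section \<open>Stochastic boundedness\<close>

lemma measure_Int_ge:
  assumes "prob_space M" "A \<in> sets M" "B \<in> sets M"
  shows "measure M (A \<inter> B) \<ge> measure M A + measure M B - 1"
proof -
  interpret prob_space M by fact
  have "measure M (A - B) = measure M A - measure M (A \<inter> B)"
    using assms(2,3) by (rule finite_measure_Diff')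
  moreover have "measure M (A - B) \<le> measure M (space M - B)"
    using assms(2,3) sets.sets_into_space[OF assms(2)] by (intro finite_measure_mono) auto
  moreover have "measure M (space M - B) = 1 - measure M B" using assms(3) by (rule prob_compl)
  ultimately show ?thesis by linarith
qed

lemma Op_add:
  assumes "prob_space M" and X: "Op F M X r" and Y: "Op F M Y r"
  shows "Op F M (\<lambda>n \<omega>. X n \<omega> + Y n \<omega>) r"
  unfolding Op_def
proof (intro allI impI)
  fix e :: real assume "e > 0"
  then have "e / 2 > 0" by simp
  then obtain K1 K2 where
      K1: "\<forall>\<^sub>F n in F. \<exists>A\<in>sets M. measure M A \<ge> 1 - e/2 \<and> (\<forall>\<omega>\<in>A. norm (X n \<omega>) \<le> K1 * r n)"
    and K2: "\<forall>\<^sub>F n in F. \<exists>B\<in>sets M. measure M B \<ge> 1 - e/2 \<and> (\<forall>\<omega>\<in>B. norm (Y n \<omega>) \<le> K2 * r n)"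
    using X Y unfolding Op_def by blast
  have "\<forall>\<^sub>F n in F. \<exists>C\<in>sets M. measure M C \<ge> 1 - e \<and> (\<forall>\<omega>\<in>C. norm (X n \<omega> + Y n \<omega>) \<le> (K1 + K2) * r n)"
    using K1 K2
  proof eventually_elim
    case (elim n)
    then obtain A B where A: "A \<in> sets M" "measure M A \<ge> 1 - e/2" "\<forall>\<omega>\<in>A. norm (X n \<omega>) \<le> K1 * r n"
      and B: "B \<in> sets M" "measure M B \<ge> 1 - e/2" "\<forall>\<omega>\<in>B. norm (Y n \<omega>) \<le> K2 * r n" by blast
    have "measure M (A \<inter> B) \<ge> 1 - e" using measure_Int_ge[OF assms(1) A(1) B(1)] A(2) B(2) by linarith
    moreover have "norm (X n \<omega> + Y n \<omega>) \<le> (K1 + K2) * r n" if "\<omega> \<in> A \<inter> B" for \<omega>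
      using A(3) B(3) that norm_triangle_ineq[of "X n \<omega>" "Y n \<omega>"] by (fastforce simp: distrib_right)
    ultimately show ?case using A(1) B(1) by blast
  qed
  then show "\<exists>K. \<forall>\<^sub>F n in F. \<exists>C\<in>sets M. measure M C \<ge> 1 - e \<and> (\<forall>\<omega>\<in>C. norm (X n \<omega> + Y n \<omega>) \<le> K * r n)"
    by blast
qed

lemma Op_mono:
  assumes "Op F M X r" and "0 \<le> c"
    and le: "\<forall>\<^sub>F n in F. \<forall>\<omega>\<in>space M. norm (Y n \<omega>) \<le> c * norm (X n \<omega>)"
  shows "Op F M Y r"
  unfolding Op_def
proof (intro allI impI)
  fix e :: real assume "e > 0"
  then obtain K where "\<forall>\<^sub>F n in F. \<exists>A\<in>sets M. measure M A \<ge> 1 - e \<and> (\<forall>\<omega>\<in>A. norm (X n \<omega>) \<le> K * r n)"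
    using assms(1) unfolding Op_def by blast
  then have "\<forall>\<^sub>F n in F. \<exists>A\<in>sets M. measure M A \<ge> 1 - e \<and> (\<forall>\<omega>\<in>A. norm (Y n \<omega>) \<le> (c * K) * r n)"
    using le
  proof eventually_elim
    case (elim n)
    then obtain A where A: "A \<in> sets M" "measure M A \<ge> 1 - e" "\<forall>\<omega>\<in>A. norm (X n \<omega>) \<le> K * r n" by blast
    have "norm (Y n \<omega>) \<le> (c * K) * r n" if "\<omega> \<in> A" for \<omega>
    proof -
      have "\<omega> \<in> space M" using sets.sets_into_space[OF A(1)] that by blast
      then have "norm (Y n \<omega>) \<le> c * norm (X n \<omega>)" using elim(2) by blast
      also have "\<dots> \<le> c * (K * r n)" using A(3) that \<open>0 \<le> c\<close> by (simp add: mult_left_mono)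
      finally show ?thesis by (simp add: mult.assoc)
    qed
    then show ?case using A by blast
  qed
  then show "\<exists>K. \<forall>\<^sub>F n in F. \<exists>A\<in>sets M. measure M A \<ge> 1 - e \<and> (\<forall>\<omega>\<in>A. norm (Y n \<omega>) \<le> K * r n)"
    by blast
qed

lemma Op_scale:
  assumes "Op F M X r"
  shows "Op F M (\<lambda>n \<omega>. c *\<^sub>R X n \<omega>) r"
  by (rule Op_mono[OF assms, of "\<bar>c\<bar>"]) auto

lemma Op_cong:
  assumes "Op F M X r" and "\<forall>\<^sub>F n in F. \<forall>\<omega>\<in>space M. X n \<omega> = Y n \<omega>"
  shows "Op F M Y r"
  by (rule Op_mono[OF assms(1), of 1]) (use assms(2) in \<open>auto elim: eventually_mono\<close>)

lemma Chebyshev_event: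
  fixes X :: "'a \<Rightarrow> 'h::real_normed_vector"
  assumes "prob_space M" and [measurable]: "X \<in> borel_measurable M"
    and "0 < K" "0 \<le> r" "0 < e" "C / K\<^sup>2 < e"
    and sq: "integrable M (\<lambda>\<omega>. (norm (X \<omega>))\<^sup>2)" and moment: "(\<integral>\<omega>. (norm (X \<omega>))\<^sup>2 \<partial>M) \<le> C * r\<^sup>2"
  shows "\<exists>A\<in>sets M. measure M A \<ge> 1 - e \<and> (\<forall>\<omega>\<in>A. norm (X \<omega>) \<le> K * r)"
proof (cases "r = 0")
  case True
  interpret prob_space M by fact
  have "(\<integral>\<omega>. (norm (X \<omega>))\<^sup>2 \<partial>M) \<le> 0" using moment True by simp
  moreover have "0 \<le> (\<integral>\<omega>. (norm (X \<omega>))\<^sup>2 \<partial>M)" by simp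
  ultimately have "AE \<omega> in M. (norm (X \<omega>))\<^sup>2 = 0"
    using integral_nonneg_eq_0_iff_AE[of M "\<lambda>\<omega>. (norm (X \<omega>))\<^sup>2"] sq by simp
  moreover have zero_set: "{\<omega> \<in> space M. X \<omega> = 0} \<in> sets M" by measurable
  ultimately have "measure M {\<omega> \<in> space M. X \<omega> = 0} = 1" by (simp add: prob_Collect_eq_1)
  then show ?thesis using \<open>0 < e\<close> True zero_set by (intro bexI[of _ "{\<omega> \<in> space M. X \<omega> = 0}"]) auto
next
  case False
  interpret prob_space M by fact
  have "r > 0" using False \<open>0 \<le> r\<close> by simp
  define B where "B = {\<omega> \<in> space M. (K * r)\<^sup>2 \<le> (norm (X \<omega>))\<^sup>2}"
  have B_sets[measurable]: "B \<in> sets M" unfolding B_def by measurable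
  have "measure M B \<le> (\<integral>\<omega>. (norm (X \<omega>))\<^sup>2 \<partial>M) / (K * r)\<^sup>2"
    unfolding B_def using sq \<open>0 < K\<close> \<open>r > 0\<close>
    by (intro integral_Markov_inequality_measure[where A="space M"]) auto
  also have "\<dots> \<le> C * r\<^sup>2 / (K * r)\<^sup>2" using moment by (intro divide_right_mono) auto
  also have "\<dots> = C / K\<^sup>2" using \<open>r > 0\<close> by (simp add: power_mult_distrib)
  finally have "measure M (space M - B) \<ge> 1 - e" using \<open>C / K\<^sup>2 < e\<close> B_sets by (simp add: prob_compl)
  moreover have "norm (X \<omega>) \<le> K * r" if "\<omega> \<in> space M - B" for \<omega>
  proof -
    have "(norm (X \<omega>))\<^sup>2 < (K * r)\<^sup>2" using that unfolding B_def by auto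
    then have "norm (X \<omega>) < K * r" using \<open>0 < K\<close> \<open>r > 0\<close> by (simp add: power_less_imp_less_base)
    then show ?thesis by simp
  qed
  ultimately show ?thesis using B_sets by (intro bexI[of _ "space M - B"]) auto
qed

lemma Op_if_second_moment_le:
  fixes X :: "nat \<Rightarrow> 'a \<Rightarrow> 'h::real_normed_vector"
  assumes "prob_space M" and [measurable]: "\<And>n. X n \<in> borel_measurable M"
    and "0 \<le> C" and r: "\<And>n. 0 \<le> r n"
    and moment: "\<And>n. integrable M (\<lambda>\<omega>. (norm (X n \<omega>))\<^sup>2) \<and> (\<integral>\<omega>. (norm (X n \<omega>))\<^sup>2 \<partial>M) \<le> C * (r n)\<^sup>2"
  shows "Op F M X r"
  unfolding Op_def
proof (intro allI impI)
  fix e :: real assume "e > 0"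
  define K where "K = sqrt (C / e) + 1"
  have "K > 0" unfolding K_def using \<open>e > 0\<close> \<open>0 \<le> C\<close> by (intro add_nonneg_pos) auto
  have "sqrt (C / e) < K" unfolding K_def by simp
  then have "(sqrt (C / e))\<^sup>2 < K\<^sup>2" using \<open>e > 0\<close> \<open>0 \<le> C\<close> by (intro power_strict_mono) auto
  then have CK: "C / K\<^sup>2 < e" using \<open>e > 0\<close> \<open>K > 0\<close> \<open>0 \<le> C\<close> by (simp add: field_simps)
  have "\<exists>A\<in>sets M. measure M A \<ge> 1 - e \<and> (\<forall>\<omega>\<in>A. norm (X n \<omega>) \<le> K * r n)" for n
    by (rule Chebyshev_event[OF assms(1,2) \<open>K > 0\<close> r \<open>e > 0\<close> CK]) (use moment[of n] in auto)
  then show "\<exists>K. \<forall>\<^sub>F n in F. \<exists>A\<in>sets M. measure M A \<ge> 1 - e \<and> (\<forall>\<omega>\<in>A. norm (X n \<omega>) \<le> K * r n)"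
    by (intro exI[of _ K] always_eventually allI) blast
qed

lemma eventually_evens: "(\<And>n. even n \<Longrightarrow> P n) \<Longrightarrow> eventually P evens"
  unfolding evens_def eventually_inf_principal by (intro always_eventually) auto

lemma emp_mean_map_upt:
  "emp_mean (map f [0..<n]) g = (1 / real n) *\<^sub>R (\<Sum>i<n. g (f i))"
  unfolding emp_mean_def by (simp add: interv_sum_list_conv_sum_set_nat atLeast0LessThan comp_def)

locale iid_sample = differentiable_functional lam Pm P0 nu hb
  for lam :: "'z::topological_space measure" and Pm P0
    and nu :: "'z measure \<Rightarrow> 'h::{real_inner,banach,second_countable_topology}" and hb +
  fixes M :: "'a measure" and Z :: "nat \<Rightarrow> 'a \<Rightarrow> 'z"
  assumes prob_M: "prob_space M" and indep: "prob_space.indep_vars M (\<lambda>_. borel) Z UNIV"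
    and distr_Z: "\<forall>i. distr M borel (Z i) = P0"
begin

lemma Z_measurable[measurable]: "Z i \<in> measurable M borel"
  using indep unfolding prob_space.indep_vars_def[OF prob_M] by auto

lemma borel_measurable_P0_iff: "f \<in> borel_measurable P0 \<longleftrightarrow> f \<in> borel_measurable borel"
proof -
  have "sets P0 = sets borel" using model P0 by auto
  from measurable_cong_sets[OF this refl, of borel] show ?thesis by (rule arg_cong)
qed

lemma integrable_comp_Z_iff:
  fixes f :: "'z \<Rightarrow> 'b::{banach,second_countable_topology}"
  assumes "f \<in> borel_measurable P0"
  shows "integrable M (\<lambda>\<omega>. f (Z i \<omega>)) \<longleftrightarrow> integrable P0 f"
proof -
  have "f \<in> borel_measurable borel" using assms borel_measurable_P0_iff by blast
  from integrable_distr_eq[OF Z_measurable this] show ?thesis using distr_Z by simp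
qed

lemma integral_comp_Z:
  fixes f :: "'z \<Rightarrow> 'b::{banach,second_countable_topology}"
  assumes "f \<in> borel_measurable P0"
  shows "(\<integral>\<omega>. f (Z i \<omega>) \<partial>M) = (\<integral>z. f z \<partial>P0)"
proof -
  have "f \<in> borel_measurable borel" using assms borel_measurable_P0_iff by blast
  from integral_distr[OF Z_measurable this] show ?thesis using distr_Z by simp
qed

text \<open>Independence and mean zero kill the cross terms.\<close>

lemma integral_sum_sample_squared:
  fixes f :: "'z \<Rightarrow> real"
  assumes f_meas[measurable]: "f \<in> borel_measurable P0" and sq: "integrable P0 (\<lambda>z. (f z)\<^sup>2)"
    and mean: "(\<integral>z. f z \<partial>P0) = 0"
  shows "integrable M (\<lambda>\<omega>. (\<Sum>i<n. f (Z i \<omega>))\<^sup>2)"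
    "(\<integral>\<omega>. (\<Sum>i<n. f (Z i \<omega>))\<^sup>2 \<partial>M) = real n * (\<integral>z. (f z)\<^sup>2 \<partial>P0)"
proof -
  interpret prob_space M by (rule prob_M)
  have [measurable]: "f \<in> borel_measurable borel" using f_meas borel_measurable_P0_iff by blast
  have fZ_meas: "(\<lambda>\<omega>. f (Z i \<omega>)) \<in> borel_measurable M" for i by measurable
  have sq_meas: "(\<lambda>z. (f z)\<^sup>2) \<in> borel_measurable P0" by measurable
  have sq_Z: "integrable M (\<lambda>\<omega>. (f (Z i \<omega>))\<^sup>2)" for i
    using integrable_comp_Z_iff[OF sq_meas, of i] sq by simp
  have int_Z: "integrable M (\<lambda>\<omega>. f (Z i \<omega>))" for i
    by (rule square_integrable_imp_integrable[OF fZ_meas sq_Z])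
  have int_ZZ: "integrable M (\<lambda>\<omega>. f (Z i \<omega>) * f (Z j \<omega>))" for i j
    by (rule integrable_mult_if_square_integrable[OF fZ_meas fZ_meas sq_Z sq_Z])
  have mean_Z: "(\<integral>\<omega>. f (Z i \<omega>) \<partial>M) = 0" for i using integral_comp_Z[OF assms(1)] mean by simp
  have indep_f: "indep_vars (\<lambda>_. borel) (\<lambda>i \<omega>. f (Z i \<omega>)) UNIV"
    by (rule indep_vars_compose2[OF indep]) simp
  have cross: "(\<integral>\<omega>. f (Z i \<omega>) * f (Z j \<omega>) \<partial>M) = (if i = j then (\<integral>z. (f z)\<^sup>2 \<partial>P0) else 0)" for i j
  proof (cases "i = j")
    case True
    then show ?thesis using integral_comp_Z[OF sq_meas, of i] by (simp add: power2_eq_square)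
  next
    case False
    have "indep_vars (\<lambda>_. borel) (\<lambda>i \<omega>. f (Z i \<omega>)) {i, j}"
      by (rule indep_vars_subset[OF indep_f]) auto
    then have "(\<integral>\<omega>. (\<Prod>l\<in>{i,j}. f (Z l \<omega>)) \<partial>M) = (\<Prod>l\<in>{i,j}. \<integral>\<omega>. f (Z l \<omega>) \<partial>M)"
      by (rule indep_vars_lebesgue_integral[rotated]) (auto intro: int_Z)
    then show ?thesis using False mean_Z by simp
  qed
  have expand: "(\<Sum>i<n. f (Z i \<omega>))\<^sup>2 = (\<Sum>i<n. \<Sum>j<n. f (Z i \<omega>) * f (Z j \<omega>))" for \<omega>
    by (simp add: power2_eq_square sum_product)
  show "integrable M (\<lambda>\<omega>. (\<Sum>i<n. f (Z i \<omega>))\<^sup>2)"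
    unfolding expand by (rule Bochner_Integration.integrable_sum, rule Bochner_Integration.integrable_sum, rule int_ZZ)
  have "(\<integral>\<omega>. (\<Sum>i<n. \<Sum>j<n. f (Z i \<omega>) * f (Z j \<omega>)) \<partial>M) = (\<Sum>i<n. \<Sum>j<n. \<integral>\<omega>. f (Z i \<omega>) * f (Z j \<omega>) \<partial>M)"
    by (simp add: Bochner_Integration.integral_sum Bochner_Integration.integrable_sum int_ZZ)
  then show "(\<integral>\<omega>. (\<Sum>i<n. f (Z i \<omega>))\<^sup>2 \<partial>M) = real n * (\<integral>z. (f z)\<^sup>2 \<partial>P0)"
    unfolding expand by (simp add: cross)
qed

lemma AE_sample_eif_summable:
  assumes "summable (\<lambda>k. (beta k)\<^sup>2)"
  shows "AE \<omega> in M. \<forall>i\<in>{..<n}. Z i \<omega> \<in> eif_summable_set beta"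
proof (rule AE_finite_allI)
  fix i
  have "AE z in distr M borel (Z i). z \<in> eif_summable_set beta"
    unfolding distr_Z[rule_format] by (rule AE_eif_summable[OF assms])
  then show "AE \<omega> in M. Z i \<omega> \<in> eif_summable_set beta" by (rule AE_distrD[OF Z_measurable])
qed simp

lemma nn_integral_sample_mean_eif_coord_squared_le:
  assumes "n > 0"
  shows "(\<integral>\<^sup>+\<omega>. ennreal ((c * ((1 / real n) * (\<Sum>i<n. eif_coord k (Z i \<omega>))))\<^sup>2) \<partial>M)
    \<le> ennreal (eio_bound\<^sup>2 * (c\<^sup>2 / real n))"
proof -
  note var = integral_sum_sample_squared[OF eif_coord_measurable square_integrable_eif_coord integral_eif_coord, of k n]
  have d_sq: "(\<lambda>\<omega>. (c * ((1 / real n) * (\<Sum>i<n. eif_coord k (Z i \<omega>))))\<^sup>2)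
      = (\<lambda>\<omega>. (c\<^sup>2 / (real n)\<^sup>2) * (\<Sum>i<n. eif_coord k (Z i \<omega>))\<^sup>2)"
    by (simp add: power_mult_distrib power_divide)
  have "integrable M (\<lambda>\<omega>. (c * ((1 / real n) * (\<Sum>i<n. eif_coord k (Z i \<omega>))))\<^sup>2)"
    unfolding d_sq using var by simp
  then have "(\<integral>\<^sup>+\<omega>. ennreal ((c * ((1 / real n) * (\<Sum>i<n. eif_coord k (Z i \<omega>))))\<^sup>2) \<partial>M)
      = ennreal (\<integral>\<omega>. (c * ((1 / real n) * (\<Sum>i<n. eif_coord k (Z i \<omega>))))\<^sup>2 \<partial>M)"
    by (rule nn_integral_eq_integral) simp
  also have "(\<integral>\<omega>. (c * ((1 / real n) * (\<Sum>i<n. eif_coord k (Z i \<omega>))))\<^sup>2 \<partial>M)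
      = c\<^sup>2 * (\<integral>z. (eif_coord k z)\<^sup>2 \<partial>P0) / real n"
    unfolding d_sq using var \<open>n > 0\<close> by (simp add: power2_eq_square field_simps)
  also have "\<dots> \<le> ennreal (eio_bound\<^sup>2 * (c\<^sup>2 / real n))"
    using integral_eif_coord_squared_le[of k]
    by (intro ennreal_leI) (auto simp: field_simps intro!: divide_right_mono mult_left_mono)
  finally show ?thesis .
qed

text \<open>Bessel's inequality reduces the bound to one coordinate at a time.\<close>

lemma nn_integral_norm_sample_mean_squared_le:
  assumes "n > 0" and beta: "summable (\<lambda>k. (beta k)\<^sup>2)"
  shows "(\<integral>\<^sup>+\<omega>. ennreal ((norm ((1 / real n) *\<^sub>R (\<Sum>i<n. reg_eif lam Pm nu hb P0 beta (Z i \<omega>))))\<^sup>2) \<partial>M)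
     \<le> ennreal (eio_bound\<^sup>2 * ((\<Sum>k. (beta k)\<^sup>2) / real n))"
proof -
  define d where "d k \<omega> = beta k * ((1 / real n) * (\<Sum>i<n. eif_coord k (Z i \<omega>)))" for k \<omega>
  have [measurable]: "eif_coord k \<in> borel_measurable borel" for k
    using eif_coord_measurable borel_measurable_P0_iff by blast
  have "AE \<omega> in M. ennreal ((norm ((1 / real n) *\<^sub>R (\<Sum>i<n. reg_eif lam Pm nu hb P0 beta (Z i \<omega>))))\<^sup>2)
      \<le> (\<Sum>k. ennreal ((d k \<omega>)\<^sup>2))"
    using AE_sample_eif_summable[OF beta, of n]
  proof eventually_elim
    case (elim \<omega>)
    have "(\<lambda>k. \<Sum>i<n. (beta k * eif_coord k (Z i \<omega>)) *\<^sub>R hb k) sums (\<Sum>i<n. reg_eif lam Pm nu hb P0 beta (Z i \<omega>))"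
      using elim by (intro sums_sum reg_eif_sums) auto
    then have "(\<lambda>k. (1 / real n) *\<^sub>R (\<Sum>i<n. (beta k * eif_coord k (Z i \<omega>)) *\<^sub>R hb k))
        sums ((1 / real n) *\<^sub>R (\<Sum>i<n. reg_eif lam Pm nu hb P0 beta (Z i \<omega>)))"
      by (rule bounded_linear.sums[OF bounded_linear_scaleR_right])
    moreover have "(1 / real n) *\<^sub>R (\<Sum>i<n. (beta k * eif_coord k (Z i \<omega>)) *\<^sub>R hb k) = d k \<omega> *\<^sub>R hb k" for k
      unfolding d_def scaleR_sum_left[symmetric] sum_distrib_left[symmetric] by (simp add: ac_simps)
    ultimately have "(\<lambda>k. d k \<omega> *\<^sub>R hb k) sums ((1 / real n) *\<^sub>R (\<Sum>i<n. reg_eif lam Pm nu hb P0 beta (Z i \<omega>)))"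
      by simp
    then show ?case by (rule ennreal_norm_squared_le_suminf[OF orth unit])
  qed
  then have "(\<integral>\<^sup>+\<omega>. ennreal ((norm ((1 / real n) *\<^sub>R (\<Sum>i<n. reg_eif lam Pm nu hb P0 beta (Z i \<omega>))))\<^sup>2) \<partial>M)
      \<le> (\<integral>\<^sup>+\<omega>. (\<Sum>k. ennreal ((d k \<omega>)\<^sup>2)) \<partial>M)"
    by (rule nn_integral_mono_AE)
  also have "\<dots> = (\<Sum>k. \<integral>\<^sup>+\<omega>. ennreal ((d k \<omega>)\<^sup>2) \<partial>M)"
    unfolding d_def by (rule nn_integral_suminf) measurable
  also have "\<dots> \<le> (\<Sum>k. ennreal (eio_bound\<^sup>2 * ((beta k)\<^sup>2 / real n)))"
    unfolding d_def using nn_integral_sample_mean_eif_coord_squared_le[OF \<open>n > 0\<close>] by (intro suminf_le) auto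
  also have "\<dots> = ennreal (\<Sum>k. eio_bound\<^sup>2 * ((beta k)\<^sup>2 / real n))"
    by (rule suminf_ennreal2) (auto intro!: summable_divide summable_mult beta)
  also have "\<dots> = ennreal (eio_bound\<^sup>2 * ((\<Sum>k. (beta k)\<^sup>2) / real n))"
    using beta by (simp add: suminf_divide suminf_mult summable_divide)
  finally show ?thesis .
qed

lemma Op_sample_mean_reg_eif:
  assumes beta: "\<forall>n. summable (\<lambda>k. (beta n k)\<^sup>2)"
  shows "Op F M (\<lambda>n \<omega>. emp_mean (map (\<lambda>i. Z i \<omega>) [0..<n]) (reg_eif lam Pm nu hb P0 (beta n)))
           (\<lambda>n. ell2_norm (beta n) / sqrt (real n))"
proof (rule Op_if_second_moment_le[OF prob_M, where C="eio_bound\<^sup>2"])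
  show "0 \<le> eio_bound\<^sup>2" by simp
  fix n
  have sum_nonneg: "0 \<le> (\<Sum>k. (beta n k)\<^sup>2)" using beta by (intro suminf_nonneg) auto
  then show "0 \<le> ell2_norm (beta n) / sqrt (real n)" unfolding ell2_norm_def by simp
  have [measurable]: "reg_eif lam Pm nu hb P0 (beta n) \<in> borel_measurable borel"
    using reg_eif_measurable borel_measurable_P0_iff by blast
  show "(\<lambda>\<omega>. emp_mean (map (\<lambda>i. Z i \<omega>) [0..<n]) (reg_eif lam Pm nu hb P0 (beta n))) \<in> borel_measurable M"
    unfolding emp_mean_map_upt by measurable
  show "integrable M (\<lambda>\<omega>. (norm (emp_mean (map (\<lambda>i. Z i \<omega>) [0..<n]) (reg_eif lam Pm nu hb P0 (beta n))))\<^sup>2) \<and>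
      (\<integral>\<omega>. (norm (emp_mean (map (\<lambda>i. Z i \<omega>) [0..<n]) (reg_eif lam Pm nu hb P0 (beta n))))\<^sup>2 \<partial>M)
        \<le> eio_bound\<^sup>2 * (ell2_norm (beta n) / sqrt (real n))\<^sup>2"
  proof (cases "n = 0")
    case False
    then show ?thesis unfolding emp_mean_map_upt ell2_norm_def
      using nn_integral_norm_sample_mean_squared_le[of n "beta n"] beta sum_nonneg
      by (intro nn_integral_le_imp_integrable) (auto simp: power_divide)
  qed (simp add: emp_mean_def)
qed

end

section \<open>The one-step estimator\<close>

lemma emp_mean_diff: "emp_mean xs (\<lambda>z. f z - g z) = emp_mean xs f - emp_mean xs g"
  unfolding emp_mean_def by (simp add: sum_list_subtractf scaleR_diff_right)

lemma emp_mean_append: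
  assumes "length xs = length ys"
  shows "emp_mean (xs @ ys) f = (1/2) *\<^sub>R (emp_mean xs f + emp_mean ys f)"
  using assms unfolding emp_mean_def by (simp add: scaleR_add_right[symmetric])

lemma sample_eq_halves: "map (\<lambda>i. Z i \<omega>) [0..<n] = first_half Z n \<omega> @ second_half Z n \<omega>"
proof -
  have "[0..<n] = [0..<n div 2] @ [n div 2..<n]"
    using upt_add_eq_append[of 0 "n div 2" "n - n div 2"] by simp
  then show ?thesis unfolding first_half_def second_half_def by simp
qed

lemma length_halves: "even n \<Longrightarrow> length (second_half Z n \<omega>) = length (first_half Z n \<omega>)"
  unfolding first_half_def second_half_def by auto

text \<open>This also holds when \<open>f\<close> is not integrable, both sides then being \<open>0\<close> by convention;
  so no integrability of the fold estimates of the EIF under \<open>P\<^sub>0\<close> is needed.\<close>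

lemma integral_diff_mean_zero:
  fixes f \<phi> :: "'z \<Rightarrow> 'h::{banach,second_countable_topology}"
  assumes "integrable P \<phi>" "(\<integral>z. \<phi> z \<partial>P) = 0"
  shows "(\<integral>z. f z - \<phi> z \<partial>P) = (\<integral>z. f z \<partial>P)"
proof (cases "integrable P f")
  case True
  then show ?thesis using assms by simp
next
  case False
  then have "\<not> integrable P (\<lambda>z. f z - \<phi> z)"
    using Bochner_Integration.integrable_add[OF _ assms(1), of "\<lambda>z. f z - \<phi> z"] by auto
  then show ?thesis using False by (simp add: not_integrable_integral_eq)
qed

lemma one_step_expansion:
  assumes \<phi>\<^sub>0: "integrable P0 (reg_eif lam Pm nu hb P0 beta)" "(\<integral>z. reg_eif lam Pm nu hb P0 beta z \<partial>P0) = 0"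
    and "length xs1 = length xs2"
  shows "one_step lam Pm nu hb beta P1 xs1 P2 xs2 - nu P0
      - ((1/2) *\<^sub>R (reg_bias nu P0 hb beta P1 + reg_bias nu P0 hb beta P2)
         + emp_mean (xs2 @ xs1) (reg_eif lam Pm nu hb P0 beta))
    = (1/2) *\<^sub>R ((reg_rem lam Pm nu hb P0 beta P1 + emp_term lam Pm nu hb P0 beta P1 xs1)
             + (reg_rem lam Pm nu hb P0 beta P2 + emp_term lam Pm nu hb P0 beta P2 xs2))"
proof -
  have fold: "reg_rem lam Pm nu hb P0 beta P + emp_term lam Pm nu hb P0 beta P xs
      = (nu P + emp_mean xs (reg_eif lam Pm nu hb P beta)) - nu P0 - reg_bias nu P0 hb beta P
        - emp_mean xs (reg_eif lam Pm nu hb P0 beta)" for P xs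
    unfolding reg_rem_def emp_term_def emp_mean_diff integral_diff_mean_zero[OF \<phi>\<^sub>0]
    by (simp add: algebra_simps)
  have "(2::real) *\<^sub>R (one_step lam Pm nu hb beta P1 xs1 P2 xs2 - nu P0
      - ((1/2) *\<^sub>R (reg_bias nu P0 hb beta P1 + reg_bias nu P0 hb beta P2)
         + emp_mean (xs2 @ xs1) (reg_eif lam Pm nu hb P0 beta)))
    = 2 *\<^sub>R ((1/2) *\<^sub>R ((reg_rem lam Pm nu hb P0 beta P1 + emp_term lam Pm nu hb P0 beta P1 xs1)
             + (reg_rem lam Pm nu hb P0 beta P2 + emp_term lam Pm nu hb P0 beta P2 xs2)))"
    unfolding fold one_step_def emp_mean_append[OF assms(3)[symmetric]]
    by (simp add: algebra_simps scaleR_2)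
  then show ?thesis by (simp only: scaleR_cancel_left) simp
qed

theorem theorem5:
  fixes lam :: "'z::polish_space measure"
    and Pm :: "'z measure set"
    and nu :: "'z measure \<Rightarrow> 'h::{real_inner,banach,second_countable_topology}"
    and hb :: "nat \<Rightarrow> 'h"
    and P0 :: "'z measure"
    and M :: "'a measure"
    and Z :: "nat \<Rightarrow> 'a \<Rightarrow> 'z"
    and est1 est2 :: "nat \<Rightarrow> 'z list \<Rightarrow> 'z measure"
    and beta :: "nat \<Rightarrow> nat \<Rightarrow> real"
  defines "Phat1 \<equiv> \<lambda>n \<omega>. est1 n (first_half Z n \<omega>)"
    and "Phat2 \<equiv> \<lambda>n \<omega>. est2 n (second_half Z n \<omega>)"
    and "rate \<equiv> \<lambda>n. ell2_norm (beta n) / sqrt (real n)"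
  assumes lam: "sigma_finite_measure lam" "sets lam = sets borel"
    and model: "\<forall>P\<in>Pm. prob_space P \<and> sets P = sets borel \<and> absolutely_continuous lam P"
    and onb: "\<forall>k. hb k = 0 \<or> norm (hb k) = 1"
      "\<forall>j k. j \<noteq> k \<longrightarrow> inner (hb j) (hb k) = 0"
      "\<forall>x. (\<lambda>k. inner x (hb k) *\<^sub>R hb k) sums x"
    and P0: "P0 \<in> Pm" "pathwise_differentiable lam Pm nu P0"
    and sample: "prob_space M" "prob_space.indep_vars M (\<lambda>_. borel) Z UNIV"
      "\<forall>i. distr M borel (Z i) = P0"
    and est: "\<forall>n. \<forall>\<omega>\<in>space M. even n \<longrightarrow>
       Phat1 n \<omega> \<in> Pm \<and> Phat2 n \<omega> \<in> Pm \<and>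
       pathwise_differentiable lam Pm nu (Phat1 n \<omega>) \<and>
       pathwise_differentiable lam Pm nu (Phat2 n \<omega>)"
    and beta: "\<forall>n. summable (\<lambda>k. (beta n k)\<^sup>2) \<and> (\<forall>k. 0 \<le> beta n k \<and> beta n k \<le> 1)"
    and R: "Op evens M (\<lambda>n \<omega>. reg_rem lam Pm nu hb P0 (beta n) (Phat1 n \<omega>)) rate"
      "Op evens M (\<lambda>n \<omega>. reg_rem lam Pm nu hb P0 (beta n) (Phat2 n \<omega>)) rate"
    and D: "Op evens M (\<lambda>n \<omega>. emp_term lam Pm nu hb P0 (beta n) (Phat1 n \<omega>) (second_half Z n \<omega>)) rate"
      "Op evens M (\<lambda>n \<omega>. emp_term lam Pm nu hb P0 (beta n) (Phat2 n \<omega>) (first_half Z n \<omega>)) rate"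
  shows "Op evens M (\<lambda>n \<omega>.
            one_step lam Pm nu hb (beta n) (Phat1 n \<omega>) (second_half Z n \<omega>) (Phat2 n \<omega>) (first_half Z n \<omega>)
            - nu P0
            - ((1/2) *\<^sub>R (reg_bias nu P0 hb (beta n) (Phat1 n \<omega>)
                          + reg_bias nu P0 hb (beta n) (Phat2 n \<omega>))
               + emp_mean (map (\<lambda>i. Z i \<omega>) [0..<n]) (reg_eif lam Pm nu hb P0 (beta n)))) rate
       \<and> ((Op evens M (\<lambda>n \<omega>. reg_bias nu P0 hb (beta n) (Phat1 n \<omega>)) rate
           \<and> Op evens M (\<lambda>n \<omega>. reg_bias nu P0 hb (beta n) (Phat2 n \<omega>)) rate)
          \<longrightarrow> Op evens M (\<lambda>n \<omega>.
                one_step lam Pm nu hb (beta n) (Phat1 n \<omega>) (second_half Z n \<omega>) (Phat2 n \<omega>) (first_half Z n \<omega>)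
                - nu P0) rate)"
proof -
  interpret iid_sample lam Pm P0 nu hb M Z
    unfolding iid_sample_def iid_sample_axioms_def differentiable_functional_def
      differentiable_functional_axioms_def dominated_model_def
    using lam model onb P0 sample by auto
  have beta_sq: "\<And>n. summable (\<lambda>k. (beta n k)\<^sup>2)" using beta by blast
  define estimator where "estimator n \<omega> = one_step lam Pm nu hb (beta n) (Phat1 n \<omega>)
    (second_half Z n \<omega>) (Phat2 n \<omega>) (first_half Z n \<omega>)" for n \<omega>
  define bias where "bias n \<omega> = (1/2) *\<^sub>R (reg_bias nu P0 hb (beta n) (Phat1 n \<omega>)
    + reg_bias nu P0 hb (beta n) (Phat2 n \<omega>))" for n \<omega>
  define mean where "mean n \<omega> = emp_mean (map (\<lambda>i. Z i \<omega>) [0..<n]) (reg_eif lam Pm nu hb P0 (beta n))" for n \<omega>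
  have expansion: "Op evens M (\<lambda>n \<omega>. estimator n \<omega> - nu P0 - (bias n \<omega> + mean n \<omega>)) rate"
  proof (rule Op_cong)
    show "Op evens M (\<lambda>n \<omega>. (1/2) *\<^sub>R
        ((reg_rem lam Pm nu hb P0 (beta n) (Phat1 n \<omega>)
          + emp_term lam Pm nu hb P0 (beta n) (Phat1 n \<omega>) (second_half Z n \<omega>))
        + (reg_rem lam Pm nu hb P0 (beta n) (Phat2 n \<omega>)
          + emp_term lam Pm nu hb P0 (beta n) (Phat2 n \<omega>) (first_half Z n \<omega>)))) rate"
      using R D by (intro Op_scale Op_add[OF sample(1)])
  qed (intro eventually_evens, simp add: estimator_def bias_def mean_def sample_eq_halves
      one_step_expansion length_halves integrable_reg_eif integral_reg_eif beta_sq)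
  have mean: "Op evens M mean rate"
    unfolding mean_def rate_def using beta_sq by (intro Op_sample_mean_reg_eif) auto
  show ?thesis
    unfolding estimator_def[symmetric] bias_def[symmetric] mean_def[symmetric]
  proof (intro conjI impI)
    show "Op evens M (\<lambda>n \<omega>. estimator n \<omega> - nu P0 - (bias n \<omega> + mean n \<omega>)) rate" by (rule expansion)
    assume "Op evens M (\<lambda>n \<omega>. reg_bias nu P0 hb (beta n) (Phat1 n \<omega>)) rate
      \<and> Op evens M (\<lambda>n \<omega>. reg_bias nu P0 hb (beta n) (Phat2 n \<omega>)) rate"
    then have "Op evens M bias rate" unfolding bias_def by (intro Op_scale Op_add[OF sample(1)]) auto
    then have "Op evens M (\<lambda>n \<omega>. (estimator n \<omega> - nu P0 - (bias n \<omega> + mean n \<omega>)) + (bias n \<omega> + mean n \<omega>)) rate"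
      using expansion mean by (intro Op_add[OF sample(1)])
    then show "Op evens M (\<lambda>n \<omega>. estimator n \<omega> - nu P0) rate" by simp
  qed
qed

end
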